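(* Let $X=(X,d,\mathcal M,\mu)$ be a separable metric measure space and $1\le p<\infty$. Suppose that for every $x\in X_0$: $B(x,\lambda)\in\mathcal M$ and $\mu(B(x,\lambda))>0$ for each $\lambda>0$, and $\mu(B(x,\lambda'(x)))<\infty$ for some $\lambda'(x)>0$. Suppose also that $X\setminus X_0$ is not dense in $X$. Then $C_a(X)$ is contained in some $Z_\sigma$-set in $L^p(X)$, and hence so is $C_u(X)$.
   Context: A metric measure space $X=(X,d,\mathcal M,\mu)$ consists of a metric space $(X,d)$, a $\sigma$-algebra $\mathcal M$ and a measure $\mu$ on $\mathcal M$. $X_0=\{x\in X:\{x\}\in\mathcal M,\ \mu(\{x\})=0\}$, $B(x,\lambda)=\{y:d(x,y)<\lambda\}$. $L^p(X)$ is the Banach space of $\mathcal M$-measurable $f:X\to\mathbb R$ with $\|f\|_p=(\int_X|f|^pd\mu)^{1/p}<\infty$, modulo a.e. equality. $C_u(X)$ is the set of classes containing a uniformly continuous function; $C_a(X)$ is the set of $f\in L^p(X)$ such that $f|_{X\setminus E}$ is continuous for some $E\subset X$ with $\mu(E)=0$. A closed set $A$ in a space $M$ is a $Z$-set if for every open cover $\mathcal U$ of $M$ there is a continuous $f:M\to M$ with $f(M)\cap A=\emptyset$ such that for each $z\in M$ some $U\in\mathcal U$ contains $\{z,f(z)\}$. A $Z_\sigma$-set is a countable union of $Z$-sets. *)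

theory Defs
  imports "HOL-Analysis.Analysis" "HOL-Probability.Probability"
begin

text \<open>The metric measure space is given by a measure M (space M = X, sets M = the
sigma-algebra, emeasure M = mu) together with a metric d on space M.\<close>

definition X0 :: "'a measure \<Rightarrow> 'a set" where
  "X0 M = {x \<in> space M. {x} \<in> sets M \<and> emeasure M {x} = 0}"

definition ae_class :: "'a measure \<Rightarrow> ('a \<Rightarrow> real) \<Rightarrow> ('a \<Rightarrow> real) set" where
  "ae_class M f = {g \<in> borel_measurable M. AE x in M. g x = f x}"

definition Lp_carrier :: "'a measure \<Rightarrow> real \<Rightarrow> ('a \<Rightarrow> real) set set" where
  "Lp_carrier M p = {ae_class M f | f. f \<in> borel_measurable M \<and>
                         integrable M (\<lambda>x. \<bar>f x\<bar> powr p)}"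

definition Lp_dist :: "'a measure \<Rightarrow> real \<Rightarrow> ('a \<Rightarrow> real) set \<Rightarrow> ('a \<Rightarrow> real) set \<Rightarrow> real" where
  "Lp_dist M p U V = (let f = (SOME f. f \<in> U); g = (SOME g. g \<in> V)
       in (integral\<^sup>L M (\<lambda>x. \<bar>f x - g x\<bar> powr p)) powr (1 / p))"

definition Lp_topology :: "'a measure \<Rightarrow> real \<Rightarrow> ('a \<Rightarrow> real) set topology" where
  "Lp_topology M p = Metric_space.mtopology (Lp_carrier M p) (Lp_dist M p)"

definition unif_cont_on :: "'a set \<Rightarrow> ('a \<Rightarrow> 'a \<Rightarrow> real) \<Rightarrow> ('a \<Rightarrow> real) \<Rightarrow> bool" where
  "unif_cont_on X d f \<longleftrightarrow> (\<forall>e>0. \<exists>\<delta>>0. \<forall>x\<in>X. \<forall>y\<in>X. d x y < \<delta> \<longrightarrow> \<bar>f x - f y\<bar> < e)"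

definition Cu :: "'a measure \<Rightarrow> ('a \<Rightarrow> 'a \<Rightarrow> real) \<Rightarrow> real \<Rightarrow> ('a \<Rightarrow> real) set set" where
  "Cu M d p = {U \<in> Lp_carrier M p. \<exists>f\<in>U. unif_cont_on (space M) d f}"

definition Ca :: "'a measure \<Rightarrow> ('a \<Rightarrow> 'a \<Rightarrow> real) \<Rightarrow> real \<Rightarrow> ('a \<Rightarrow> real) set set" where
  "Ca M d p = {U \<in> Lp_carrier M p. \<exists>f\<in>U. \<exists>E. E \<in> null_sets M \<and>
      continuous_map (subtopology (Metric_space.mtopology (space M) d) (space M - E)) euclideanreal f}"

definition Z_set :: "'b topology \<Rightarrow> 'b set \<Rightarrow> bool" where
  "Z_set T A \<longleftrightarrow> closedin T A \<and>
     (\<forall>\<U>. (\<forall>U\<in>\<U>. openin T U) \<and> \<Union>\<U> = topspace T \<longrightarrow>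
        (\<exists>f. continuous_map T T f \<and> f ` topspace T \<inter> A = {} \<and>
             (\<forall>z\<in>topspace T. \<exists>U\<in>\<U>. z \<in> U \<and> f z \<in> U)))"

definition Z_sigma_set :: "'b topology \<Rightarrow> 'b set \<Rightarrow> bool" where
  "Z_sigma_set T S \<longleftrightarrow> (\<exists>\<A>. countable \<A> \<and> (\<forall>A\<in>\<A>. Z_set T A) \<and> S = \<Union>\<A>)"

end

theory Submission
  imports Defs
begin

text \<open>Fix a ball \<open>B\<^sub>0 \<subseteq> X\<^sub>0\<close> of finite measure. For a ball \<open>B \<subseteq> B\<^sub>0\<close>, let \<open>A\<^sub>B\<close> be the set of
  classes whose averages over any two subsets of \<open>B\<close> of positive measure differ by at most 1.
  Averages over a set of finite measure are Lipschitz on \<open>L\<^sup>p\<close>, so \<open>A\<^sub>B\<close> is closed. It is a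
  \<open>Z\<close>-set because \<open>B\<close> contains disjoint pieces \<open>P\<^sub>0, P\<^sub>1, \<dots>\<close> of positive measure (balls around
  non-atoms shrinking to a non-atom): a class \<open>u\<close> is moved by overwriting it, on the pieces
  \<open>P\<^sub>k\<close> with \<open>k\<close> large, by the constant \<open>avg\<^sub>P\<^sub>0 u + 2\<close>. How far out to start is governed by the
  \<open>L\<^sup>p\<close>-norm of the tail of \<open>u\<close> compared with the size of the balls around \<open>u\<close> that fit into
  a member of the given cover, which makes the move continuous and cover-small.
  A function continuous off a null set is, near a point of \<open>B\<^sub>0\<close> outside that null set,
  within \<open>1/2\<close> of a constant on some ball with centre in a countable dense set and radius
  \<open>1/(n+1)\<close>; so \<open>C\<^sub>a(X)\<close> lies in the union of countably many \<open>A\<^sub>B\<close>.\<close>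

text \<open>Convexity of \<open>t powr p\<close> with the weights \<open>a / (a + b)\<close> and \<open>b / (a + b)\<close>: the
  pointwise core of Minkowski's inequality.\<close>

lemma powr_add_le_weighted:
  fixes x y a b p :: real
  assumes p: "1 \<le> p" and x: "0 \<le> x" and y: "0 \<le> y" and a: "0 < a" and b: "0 < b"
  shows "(x + y) powr p \<le> (a + b) powr (p - 1) * (a powr (1 - p) * x powr p + b powr (1 - p) * y powr p)"
proof -
  define t where "t = a / (a + b)"
  have t01: "0 < t" "t < 1" using a b by (auto simp: t_def field_simps)
  have one_minus_t: "1 - t = b / (a + b)" using a b by (simp add: t_def field_simps)
  have "x + y = (a + b) * (t * (x / a) + (1 - t) * (y / b))"
    using a b unfolding one_minus_t by (simp add: t_def distrib_left)
  hence "(x + y) powr p = (a + b) powr p * (t * (x / a) + (1 - t) * (y / b)) powr p"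
    using a b x y by (simp add: powr_mult)
  also have "(t * (x / a) + (1 - t) * (y / b)) powr p \<le> t * (x / a) powr p + (1 - t) * (y / b) powr p"
  proof (cases "x = 0 \<or> y = 0")
    case True
    have "(s * z) powr p \<le> s * z powr p" if "0 < s" "s < 1" "0 \<le> z" for s z :: real
      using that p powr_mono'[of 1 p s] by (simp add: powr_mult mult_right_mono)
    from this[of t "x / a"] this[of "1 - t" "y / b"] show ?thesis
      using True t01 x y a b by auto
  next
    case False
    hence "0 < x / a" "0 < y / b" using x y a b by auto
    then show ?thesis
      using powr_convex[OF p] t01 unfolding convex_on_def
      by (simp only: greaterThan_iff real_scaleR_def)
  qed
  hence "(a + b) powr p * (t * (x / a) + (1 - t) * (y / b)) powr p
      \<le> (a + b) powr p * (t * (x / a) powr p + (1 - t) * (y / b) powr p)"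
    using a b by (intro mult_left_mono) auto
  also have "\<dots> = (a + b) powr (p - 1) * (((a + b) * t) * (x / a) powr p + ((a + b) * (1 - t)) * (y / b) powr p)"
    using powr_add[of "a + b" "p - 1" 1] a b by (simp add: algebra_simps)
  also have "\<dots> = (a + b) powr (p - 1) * (a powr (1 - p) * x powr p + b powr (1 - p) * y powr p)"
  proof -
    have "a * (x / a) powr p = a powr (1 - p) * x powr p" "b * (y / b) powr p = b powr (1 - p) * y powr p"
      using a b x y by (simp_all add: powr_divide powr_diff)
    moreover have "(a + b) * t = a" "(a + b) * (1 - t) = b"
      using a b unfolding one_minus_t by (simp_all add: t_def)
    ultimately show ?thesis by simp
  qed
  finally show ?thesis .
qed

lemma abs_le_powr_bound:
  fixes t e p :: real assumes p: "1 \<le> p" and e: "0 < e"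
  shows "\<bar>t\<bar> \<le> e + e powr (1 - p) * \<bar>t\<bar> powr p"
proof (cases "\<bar>t\<bar> \<le> e")
  case True
  then show ?thesis by (smt (verit) mult_nonneg_nonneg powr_ge_zero)
next
  case False
  have "\<bar>t\<bar> powr p = \<bar>t\<bar> * \<bar>t\<bar> powr (p - 1)" using False e by (simp add: powr_diff)
  moreover have "e powr (p - 1) \<le> \<bar>t\<bar> powr (p - 1)" using False e p by (intro powr_mono2) auto
  ultimately have "\<bar>t\<bar> * e powr (p - 1) \<le> \<bar>t\<bar> powr p" by (simp add: mult_left_mono)
  hence "e powr (1 - p) * (\<bar>t\<bar> * e powr (p - 1)) \<le> e powr (1 - p) * \<bar>t\<bar> powr p"
    by (intro mult_left_mono) auto
  moreover have "e powr (1 - p) * (\<bar>t\<bar> * e powr (p - 1)) = \<bar>t\<bar>"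
    using e by (simp add: powr_add[symmetric])
  ultimately show ?thesis using e by simp
qed

lemma clamp_lipschitz: "\<bar>max 0 (min 1 (2 - x)) - max 0 (min 1 (2 - y))\<bar> \<le> \<bar>x - y :: real\<bar>"
  by (simp add: max_def min_def abs_if)

lemma abs_diff_divide_le:
  fixes t t' d d' \<delta> c b :: real
  assumes d: "0 < d" and dd: "\<bar>d - d'\<bar> \<le> \<delta>" and \<delta>: "\<delta> \<le> d / 2"
    and tt: "\<bar>t - t'\<bar> \<le> c * \<delta>" and t': "0 \<le> t'" "t' \<le> b"
  shows "\<bar>t / d - t' / d'\<bar> \<le> (c / d + 2 * b / d\<^sup>2) * \<delta>"
proof -
  have d': "d / 2 \<le> d'" and \<delta>0: "0 \<le> \<delta>" using dd \<delta> unfolding abs_le_iff by linarith+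
  have d'_pos: "0 < d'" using d d' by linarith
  have "t / d - t' / d' = (t - t') / d + t' * (d' - d) / (d * d')"
    using d d'_pos by (simp add: field_simps)
  then have "\<bar>t / d - t' / d'\<bar> \<le> \<bar>t - t'\<bar> / d + t' * \<bar>d' - d\<bar> / (d * d')"
    using abs_triangle_ineq[of "(t - t') / d" "t' * (d' - d) / (d * d')"] d d'_pos t'(1)
    by (simp add: abs_mult)
  also have "\<dots> \<le> c * \<delta> / d + b * \<delta> / (d * (d / 2))"
  proof (rule add_mono)
    show "\<bar>t - t'\<bar> / d \<le> c * \<delta> / d" using tt d by (simp add: divide_right_mono)
    have "t' * \<bar>d' - d\<bar> \<le> b * \<delta>" using t' dd by (intro mult_mono) (auto simp: abs_minus_commute)
    then show "t' * \<bar>d' - d\<bar> / (d * d') \<le> b * \<delta> / (d * (d / 2))"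
      using d d' t' \<delta>0 by (intro frac_le) auto
  qed
  also have "\<dots> = (c / d + 2 * b / d\<^sup>2) * \<delta>" using d by (simp add: field_simps power2_eq_square)
  finally show ?thesis .
qed

lemma abs_convex_comb_le:
  fixes l e c m w :: real assumes "0 \<le> l" "l \<le> 1"
  shows "\<bar>(1 - l) * e + l * c + m * w\<bar> \<le> \<bar>e\<bar> + \<bar>c\<bar> + \<bar>m\<bar> * \<bar>w\<bar>"
proof -
  have "\<bar>(1 - l) * e\<bar> \<le> \<bar>e\<bar>" "\<bar>l * c\<bar> \<le> \<bar>c\<bar>"
    using assms by (simp_all add: abs_mult mult_left_le_one_le)
  moreover have "\<bar>m * w\<bar> = \<bar>m\<bar> * \<bar>w\<bar>" by (simp add: abs_mult)
  ultimately show ?thesis by (smt (verit))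
qed

definition class_rep :: "'b set \<Rightarrow> 'b" where
  "class_rep U = (SOME f. f \<in> U)"

definition set_average :: "'a measure \<Rightarrow> 'a set \<Rightarrow> ('a \<Rightarrow> real) \<Rightarrow> real" where
  "set_average M S f = (\<integral>x. f x * indicator S x \<partial>M) / measure M S"

definition small_oscillation :: "'a measure \<Rightarrow> real \<Rightarrow> 'a set \<Rightarrow> ('a \<Rightarrow> real) set set" where
  "small_oscillation M p B = {U \<in> Lp_carrier M p. \<forall>S1 S2. S1 \<in> sets M \<longrightarrow> S2 \<in> sets M \<longrightarrow>
     S1 \<subseteq> B \<longrightarrow> S2 \<subseteq> B \<longrightarrow> 0 < measure M S1 \<longrightarrow> 0 < measure M S2 \<longrightarrow>
     \<bar>set_average M S1 (class_rep U) - set_average M S2 (class_rep U)\<bar> \<le> 1}"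

section \<open>The metric space \<open>L\<^sup>p\<close>\<close>

locale Lp_space =
  fixes M :: "'a measure" and p :: real
  assumes one_le_p: "1 \<le> p"
begin

lemma p_pos: "0 < p" using one_le_p by simp

definition Lp_fun :: "('a \<Rightarrow> real) \<Rightarrow> bool" where
  "Lp_fun f \<longleftrightarrow> f \<in> borel_measurable M \<and> integrable M (\<lambda>x. \<bar>f x\<bar> powr p)"

definition Lp_norm :: "('a \<Rightarrow> real) \<Rightarrow> real" where
  "Lp_norm f = (\<integral>x. \<bar>f x\<bar> powr p \<partial>M) powr (1/p)"

lemma Lp_integral_nonneg: "0 \<le> (\<integral>x. \<bar>f x\<bar> powr p \<partial>M)"
  by (intro integral_nonneg_AE) auto

lemma Lp_norm_nonneg: "0 \<le> Lp_norm f"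
  unfolding Lp_norm_def by simp

lemma Lp_norm_powr: "Lp_norm f powr p = (\<integral>x. \<bar>f x\<bar> powr p \<partial>M)"
  unfolding Lp_norm_def using Lp_integral_nonneg[of f] p_pos by (simp add: powr_powr)

lemma Lp_norm_le_iff: assumes "0 \<le> r" shows "Lp_norm f \<le> r \<longleftrightarrow> (\<integral>x. \<bar>f x\<bar> powr p \<partial>M) \<le> r powr p"
proof
  assume "Lp_norm f \<le> r"
  hence "Lp_norm f powr p \<le> r powr p" using Lp_norm_nonneg p_pos by (intro powr_mono2) auto
  thus "(\<integral>x. \<bar>f x\<bar> powr p \<partial>M) \<le> r powr p" by (simp add: Lp_norm_powr)
next
  assume "(\<integral>x. \<bar>f x\<bar> powr p \<partial>M) \<le> r powr p"
  hence "(\<integral>x. \<bar>f x\<bar> powr p \<partial>M) powr (1/p) \<le> (r powr p) powr (1/p)"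
    using Lp_integral_nonneg p_pos by (intro powr_mono2) auto
  thus "Lp_norm f \<le> r" using assms p_pos by (simp add: Lp_norm_def powr_powr)
qed

lemma Lp_norm_less_iff: assumes "0 \<le> r" shows "Lp_norm f < r \<longleftrightarrow> (\<integral>x. \<bar>f x\<bar> powr p \<partial>M) < r powr p"
proof
  assume "Lp_norm f < r"
  hence "Lp_norm f powr p < r powr p" using Lp_norm_nonneg p_pos by (intro powr_less_mono2) auto
  thus "(\<integral>x. \<bar>f x\<bar> powr p \<partial>M) < r powr p" by (simp add: Lp_norm_powr)
next
  assume "(\<integral>x. \<bar>f x\<bar> powr p \<partial>M) < r powr p"
  hence "(\<integral>x. \<bar>f x\<bar> powr p \<partial>M) powr (1/p) < (r powr p) powr (1/p)"
    using Lp_integral_nonneg p_pos by (intro powr_less_mono2) auto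
  thus "Lp_norm f < r" using assms p_pos by (simp add: Lp_norm_def powr_powr)
qed

lemma Lp_dominated_AE:
  assumes g: "Lp_fun g" and f: "f \<in> borel_measurable M" and le: "AE x in M. \<bar>f x\<bar> \<le> \<bar>g x\<bar>"
  shows "Lp_fun f" "Lp_norm f \<le> Lp_norm g"
proof -
  have le2: "AE x in M. \<bar>f x\<bar> powr p \<le> \<bar>g x\<bar> powr p"
    using le by (rule eventually_mono) (rule powr_mono2, use p_pos in auto)
  have gi: "integrable M (\<lambda>x. \<bar>g x\<bar> powr p)" using g by (simp add: Lp_fun_def)
  have fm: "(\<lambda>x. \<bar>f x\<bar> powr p) \<in> borel_measurable M" using f by measurable
  have le3: "AE x in M. norm (\<bar>f x\<bar> powr p) \<le> norm (\<bar>g x\<bar> powr p)"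
    using le2 by (rule eventually_mono) simp
  have i: "integrable M (\<lambda>x. \<bar>f x\<bar> powr p)"
    by (rule Bochner_Integration.integrable_bound[OF gi fm le3])
  thus "Lp_fun f" using f by (simp add: Lp_fun_def)
  have "(\<integral>x. \<bar>f x\<bar> powr p \<partial>M) \<le> (\<integral>x. \<bar>g x\<bar> powr p \<partial>M)"
    by (rule integral_mono_AE[OF i gi le2])
  thus "Lp_norm f \<le> Lp_norm g" unfolding Lp_norm_def using Lp_integral_nonneg p_pos by (intro powr_mono2) auto
qed

lemma Lp_norm_cong_AE:
  assumes "AE x in M. f x = g x" "f \<in> borel_measurable M" "g \<in> borel_measurable M"
  shows "Lp_norm f = Lp_norm g"
proof -
  have m1: "(\<lambda>x. \<bar>f x\<bar> powr p) \<in> borel_measurable M" using assms(2) by measurable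
  have m2: "(\<lambda>x. \<bar>g x\<bar> powr p) \<in> borel_measurable M" using assms(3) by measurable
  have e: "AE x in M. \<bar>f x\<bar> powr p = \<bar>g x\<bar> powr p" using assms(1) by (rule eventually_mono) simp
  show ?thesis unfolding Lp_norm_def using integral_cong_AE[OF m1 m2 e] by simp
qed

lemma Lp_norm_eq_0_AE: assumes "Lp_fun f" "Lp_norm f = 0" shows "AE x in M. f x = 0"
proof -
  have "(\<integral>x. \<bar>f x\<bar> powr p \<partial>M) = 0" using assms(2) by (simp add: Lp_norm_def)
  hence "AE x in M. \<bar>f x\<bar> powr p = 0"
    using assms(1) unfolding Lp_fun_def by (subst integral_nonneg_eq_0_iff_AE[symmetric]) auto
  thus ?thesis by eventually_elim simp
qed

lemma Lp_norm_zero: "Lp_norm (\<lambda>x. 0) = 0" using p_pos by (simp add: Lp_norm_def)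

lemma Lp_norm_uminus: "Lp_norm (\<lambda>x. - f x) = Lp_norm f" by (simp add: Lp_norm_def)

lemma Lp_fun_uminus: "Lp_fun f \<Longrightarrow> Lp_fun (\<lambda>x. - f x)" by (simp add: Lp_fun_def)

lemma Lp_norm_abs: "Lp_norm (\<lambda>x. \<bar>f x\<bar>) = Lp_norm f" by (simp add: Lp_norm_def)

lemma Lp_fun_abs: "Lp_fun f \<Longrightarrow> Lp_fun (\<lambda>x. \<bar>f x\<bar>)"
  unfolding Lp_fun_def by (simp add: borel_measurable_abs)

lemma Minkowski_inequality_pos:
  assumes f: "Lp_fun f" and g: "Lp_fun g" and pos: "0 < Lp_norm f" "0 < Lp_norm g"
  shows "Lp_fun (\<lambda>x. f x + g x) \<and> Lp_norm (\<lambda>x. f x + g x) \<le> Lp_norm f + Lp_norm g"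
proof -
  have fm: "f \<in> borel_measurable M" and gm: "g \<in> borel_measurable M"
    using f g by (auto simp: Lp_fun_def)
  define a where "a = Lp_norm f"
  define b where "b = Lp_norm g"
  have a: "0 < a" and b: "0 < b" using pos by (simp_all add: a_def b_def)
  \<comment> \<open>integrating this pointwise bound gives \<open>(a + b) powr p\<close>\<close>
  define R where "R x = (a + b) powr (p - 1) * (a powr (1 - p) * \<bar>f x\<bar> powr p + b powr (1 - p) * \<bar>g x\<bar> powr p)" for x
  have Ri: "integrable M R" using f g unfolding R_def Lp_fun_def by auto
  have pt: "\<bar>f x + g x\<bar> powr p \<le> R x" for x
  proof -
    have "\<bar>f x + g x\<bar> powr p \<le> (\<bar>f x\<bar> + \<bar>g x\<bar>) powr p"
      using p_pos by (intro powr_mono2) auto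
    also have "\<dots> \<le> R x" unfolding R_def by (rule powr_add_le_weighted[OF one_le_p _ _ a b]) auto
    finally show ?thesis .
  qed
  have R0: "0 \<le> R x" for x unfolding R_def by (intro mult_nonneg_nonneg add_nonneg_nonneg) auto
  have i: "integrable M (\<lambda>x. \<bar>f x + g x\<bar> powr p)"
    using fm gm pt R0 by (intro Bochner_Integration.integrable_bound[OF Ri]) auto
  have "(\<integral>x. \<bar>f x + g x\<bar> powr p \<partial>M) \<le> integral\<^sup>L M R"
    using pt by (intro integral_mono[OF i Ri])
  also have "integral\<^sup>L M R = (a + b) powr (p - 1) * (a powr (1 - p) * a powr p + b powr (1 - p) * b powr p)"
  proof -
    have fi: "integrable M (\<lambda>x. \<bar>f x\<bar> powr p)" and gi: "integrable M (\<lambda>x. \<bar>g x\<bar> powr p)"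
      using f g by (auto simp: Lp_fun_def)
    have "integral\<^sup>L M R = (a + b) powr (p - 1) * (\<integral>x. a powr (1 - p) * \<bar>f x\<bar> powr p + b powr (1 - p) * \<bar>g x\<bar> powr p \<partial>M)"
      unfolding R_def by (rule integral_mult_right_zero)
    also have "(\<integral>x. a powr (1 - p) * \<bar>f x\<bar> powr p + b powr (1 - p) * \<bar>g x\<bar> powr p \<partial>M)
        = a powr (1 - p) * (\<integral>x. \<bar>f x\<bar> powr p \<partial>M) + b powr (1 - p) * (\<integral>x. \<bar>g x\<bar> powr p \<partial>M)"
      using fi gi by (simp add: integral_add)
    finally show ?thesis by (simp only: a_def b_def Lp_norm_powr)
  qed
  also have "\<dots> = (a + b) powr p"
  proof -
    have "a powr (1 - p) * a powr p = a" using a by (simp add: powr_add[symmetric])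
    moreover have "b powr (1 - p) * b powr p = b" using b by (simp add: powr_add[symmetric])
    moreover have "(a + b) powr (p - 1) * (a + b) = (a + b) powr p"
      using a b powr_add[of "a+b" "p - 1" 1] by simp
    ultimately show ?thesis by simp
  qed
  finally have "Lp_norm (\<lambda>x. f x + g x) \<le> a + b" using a b by (subst Lp_norm_le_iff) auto
  then show ?thesis using i fm gm by (simp add: Lp_fun_def a_def b_def)
qed

lemma Minkowski_inequality:
  assumes f: "Lp_fun f" and g: "Lp_fun g"
  shows "Lp_fun (\<lambda>x. f x + g x)" "Lp_norm (\<lambda>x. f x + g x) \<le> Lp_norm f + Lp_norm g"
proof -
  have fg: "(\<lambda>x. f x + g x) \<in> borel_measurable M" using f g by (auto simp: Lp_fun_def)
  consider "Lp_norm f = 0" | "Lp_norm g = 0" | "0 < Lp_norm f" "0 < Lp_norm g"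
    using Lp_norm_nonneg[of f] Lp_norm_nonneg[of g] by linarith
  then have "Lp_fun (\<lambda>x. f x + g x) \<and> Lp_norm (\<lambda>x. f x + g x) \<le> Lp_norm f + Lp_norm g"
  proof cases
    case 1
    have "AE x in M. \<bar>f x + g x\<bar> \<le> \<bar>g x\<bar>"
      using Lp_norm_eq_0_AE[OF f 1] by eventually_elim simp
    then show ?thesis using Lp_dominated_AE[OF g fg] 1 by simp
  next
    case 2
    have "AE x in M. \<bar>f x + g x\<bar> \<le> \<bar>f x\<bar>"
      using Lp_norm_eq_0_AE[OF g 2] by eventually_elim simp
    then show ?thesis using Lp_dominated_AE[OF f fg] 2 by simp
  next
    case 3
    then show ?thesis by (rule Minkowski_inequality_pos[OF f g])
  qed
  then show "Lp_fun (\<lambda>x. f x + g x)" "Lp_norm (\<lambda>x. f x + g x) \<le> Lp_norm f + Lp_norm g" by auto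
qed

lemma Minkowski_inequality_diff:
  assumes f: "Lp_fun f" and g: "Lp_fun g"
  shows "Lp_fun (\<lambda>x. f x - g x)" "Lp_norm (\<lambda>x. f x - g x) \<le> Lp_norm f + Lp_norm g"
proof -
  have "Lp_fun (\<lambda>x. f x + - g x)" "Lp_norm (\<lambda>x. f x + - g x) \<le> Lp_norm f + Lp_norm (\<lambda>x. - g x)"
    by (rule Minkowski_inequality[OF f Lp_fun_uminus[OF g]])+
  thus "Lp_fun (\<lambda>x. f x - g x)" "Lp_norm (\<lambda>x. f x - g x) \<le> Lp_norm f + Lp_norm g"
    by (simp_all only: diff_conv_add_uminus Lp_norm_uminus)
qed


abbreviation Lp where "Lp \<equiv> Lp_carrier M p"
abbreviation dLp where "dLp \<equiv> Lp_dist M p"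

lemma mem_ae_class: "g \<in> ae_class M f \<longleftrightarrow> g \<in> borel_measurable M \<and> (AE x in M. g x = f x)"
  by (simp add: ae_class_def)

lemma ae_class_self: "f \<in> borel_measurable M \<Longrightarrow> f \<in> ae_class M f"
  by (simp add: ae_class_def)

lemma ae_class_in_Lp: "Lp_fun f \<Longrightarrow> ae_class M f \<in> Lp"
  unfolding Lp_carrier_def Lp_fun_def by blast

lemma Lp_carrierE: "U \<in> Lp \<Longrightarrow> \<exists>f. Lp_fun f \<and> U = ae_class M f"
  unfolding Lp_carrier_def Lp_fun_def by blast

lemma class_rep_mem: assumes "U \<in> Lp" shows "class_rep U \<in> U"
proof -
  obtain f where f: "Lp_fun f" "U = ae_class M f" using Lp_carrierE[OF assms] by blast
  hence "f \<in> U" using ae_class_self by (simp add: Lp_fun_def)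
  thus ?thesis unfolding class_rep_def by (metis someI)
qed

lemma Lp_fun_cong_AE:
  assumes "Lp_fun f" "g \<in> borel_measurable M" "AE x in M. g x = f x" shows "Lp_fun g"
proof -
  have "AE x in M. \<bar>g x\<bar> \<le> \<bar>f x\<bar>" using assms(3) by (rule eventually_mono) simp
  thus ?thesis using Lp_dominated_AE[OF assms(1) assms(2)] by blast
qed

lemma Lp_carrier_mem:
  assumes "U \<in> Lp" "g \<in> U"
  shows "Lp_fun g" "AE x in M. g x = class_rep U x" "g \<in> borel_measurable M"
proof -
  obtain f where f: "Lp_fun f" "U = ae_class M f" using Lp_carrierE[OF assms(1)] by blast
  have r: "class_rep U \<in> borel_measurable M" "AE x in M. class_rep U x = f x"
    using class_rep_mem[OF assms(1)] f(2) mem_ae_class by auto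
  have g: "g \<in> borel_measurable M" "AE x in M. g x = f x" using assms(2) f(2) mem_ae_class by auto
  show "Lp_fun g" using Lp_fun_cong_AE[OF f(1) g] .
  show "AE x in M. g x = class_rep U x" using g(2) r(2) by eventually_elim simp
  show "g \<in> borel_measurable M" by (rule g(1))
qed

lemma Lp_fun_class_rep: "U \<in> Lp \<Longrightarrow> Lp_fun (class_rep U)"
  using Lp_carrier_mem(1) class_rep_mem by blast

lemma class_rep_measurable: "U \<in> Lp \<Longrightarrow> class_rep U \<in> borel_measurable M"
  using Lp_fun_class_rep by (simp add: Lp_fun_def)

lemma Lp_carrier_ae_class_rep: assumes "U \<in> Lp" shows "U = ae_class M (class_rep U)"
proof -
  obtain f where f: "Lp_fun f" "U = ae_class M f" using Lp_carrierE[OF assms] by blast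
  have r: "AE x in M. class_rep U x = f x"
    using class_rep_mem[OF assms] f(2) mem_ae_class by auto
  show ?thesis
  proof (rule set_eqI)
    fix g
    have "g \<in> U \<longleftrightarrow> g \<in> borel_measurable M \<and> (AE x in M. g x = f x)"
      using f(2) mem_ae_class by simp
    also have "\<dots> \<longleftrightarrow> g \<in> borel_measurable M \<and> (AE x in M. g x = class_rep U x)"
      using r by auto
    finally show "g \<in> U \<longleftrightarrow> g \<in> ae_class M (class_rep U)" using mem_ae_class by simp
  qed
qed

lemma class_rep_ae_class: assumes "Lp_fun f" shows "AE x in M. class_rep (ae_class M f) x = f x"
proof -
  have "f \<in> borel_measurable M" using assms by (simp add: Lp_fun_def)
  hence "class_rep (ae_class M f) \<in> ae_class M f" using class_rep_mem ae_class_in_Lp[OF assms] by blast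
  thus ?thesis by (simp add: mem_ae_class)
qed

lemma Lp_dist_class_rep: "dLp U V = Lp_norm (\<lambda>x. class_rep U x - class_rep V x)"
  unfolding Lp_dist_def Lp_norm_def class_rep_def Let_def by simp

lemma Lp_dist_eq_Lp_norm:
  assumes "U \<in> Lp" "V \<in> Lp" "f \<in> U" "g \<in> V"
  shows "dLp U V = Lp_norm (\<lambda>x. f x - g x)"
proof -
  have "AE x in M. class_rep U x - class_rep V x = f x - g x"
    using Lp_carrier_mem(2)[OF assms(1,3)] Lp_carrier_mem(2)[OF assms(2,4)] by eventually_elim simp
  moreover have "(\<lambda>x. class_rep U x - class_rep V x) \<in> borel_measurable M"
    using class_rep_measurable[OF assms(1)] class_rep_measurable[OF assms(2)] by measurable
  moreover have "(\<lambda>x. f x - g x) \<in> borel_measurable M"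
    using Lp_carrier_mem(3)[OF assms(1,3)] Lp_carrier_mem(3)[OF assms(2,4)] by measurable
  ultimately show ?thesis unfolding Lp_dist_class_rep by (rule Lp_norm_cong_AE)
qed

lemma Lp_norm_diff_commute: "Lp_norm (\<lambda>x. f x - g x) = Lp_norm (\<lambda>x. g x - f x)"
  unfolding Lp_norm_def by (simp add: abs_minus_commute)

lemma Lp_fun_class_rep_diff: "U \<in> Lp \<Longrightarrow> V \<in> Lp \<Longrightarrow> Lp_fun (\<lambda>x. class_rep U x - class_rep V x)"
  by (rule Minkowski_inequality_diff(1)[OF Lp_fun_class_rep Lp_fun_class_rep])

lemma Metric_space_Lp: "Metric_space Lp dLp"
proof
  fix U V
  show "0 \<le> dLp U V" unfolding Lp_dist_class_rep by (rule Lp_norm_nonneg)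
  show "dLp U V = dLp V U" unfolding Lp_dist_class_rep by (rule Lp_norm_diff_commute)
next
  fix U V assume U: "U \<in> Lp" and V: "V \<in> Lp"
  show "dLp U V = 0 \<longleftrightarrow> U = V"
  proof
    assume "dLp U V = 0"
    then have "AE x in M. class_rep U x - class_rep V x = 0"
      using Lp_norm_eq_0_AE[OF Lp_fun_class_rep_diff[OF U V]] by (simp add: Lp_dist_class_rep)
    then have "AE x in M. class_rep U x = class_rep V x" by (rule eventually_mono) simp
    then have "ae_class M (class_rep U) = ae_class M (class_rep V)"
      unfolding ae_class_def by auto
    then show "U = V" using Lp_carrier_ae_class_rep[OF U] Lp_carrier_ae_class_rep[OF V] by simp
  next
    assume "U = V" then show "dLp U V = 0" unfolding Lp_dist_class_rep using Lp_norm_zero by simp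
  qed
next
  fix U V W assume U: "U \<in> Lp" and V: "V \<in> Lp" and W: "W \<in> Lp"
  have "Lp_norm (\<lambda>x. (class_rep U x - class_rep V x) + (class_rep V x - class_rep W x))
      \<le> Lp_norm (\<lambda>x. class_rep U x - class_rep V x) + Lp_norm (\<lambda>x. class_rep V x - class_rep W x)"
    by (rule Minkowski_inequality(2)[OF Lp_fun_class_rep_diff[OF U V] Lp_fun_class_rep_diff[OF V W]])
  then show "dLp U W \<le> dLp U V + dLp V W" unfolding Lp_dist_class_rep by simp
qed

lemma Lp_dominated:
  assumes g: "Lp_fun g" and f: "f \<in> borel_measurable M" and le: "\<And>x. x \<in> space M \<Longrightarrow> \<bar>f x\<bar> \<le> \<bar>g x\<bar>"
  shows "Lp_fun f" "Lp_norm f \<le> Lp_norm g"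
  using Lp_dominated_AE[OF g f] le by auto

lemma integrable_mult_indicator:
  assumes w: "Lp_fun w" and S: "S \<in> sets M" "emeasure M S < \<infinity>"
  shows "integrable M (\<lambda>x. w x * indicator S x)"
proof -
  have wm: "w \<in> borel_measurable M" using w by (simp add: Lp_fun_def)
  have Si: "integrable M (indicator S :: 'a \<Rightarrow> real)" using S by (simp add: integrable_indicator_iff)
  have bi: "integrable M (\<lambda>x. indicator S x + \<bar>w x\<bar> powr p)"
    using Si w by (simp add: Lp_fun_def)
  have m: "(\<lambda>x. w x * indicator S x) \<in> borel_measurable M" using wm S by measurable
  have "AE x in M. norm (w x * indicator S x) \<le> norm (indicator S x + \<bar>w x\<bar> powr p)"
  proof (rule AE_I2)
    fix x
    have "\<bar>w x\<bar> * indicator S x \<le> indicator S x + \<bar>w x\<bar> powr p"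
      using abs_le_powr_bound[OF one_le_p, of 1 "w x"] by (cases "x \<in> S") auto
    thus "norm (w x * indicator S x) \<le> norm (indicator S x + \<bar>w x\<bar> powr p)"
      by (simp add: abs_mult)
  qed
  thus ?thesis by (rule Bochner_Integration.integrable_bound[OF bi m])
qed

lemma L1_norm_on_le:
  assumes w: "Lp_fun w" and S: "S \<in> sets M" "emeasure M S < \<infinity>"
  shows "(\<integral>x. \<bar>w x\<bar> * indicator S x \<partial>M) \<le> 2 * measure M S powr (1 - 1/p) * Lp_norm w"
proof -
  have ii: "integrable M (\<lambda>x. \<bar>w x\<bar> * indicator S x)"
    by (rule integrable_mult_indicator[OF Lp_fun_abs[OF w] S])
  have wi: "integrable M (\<lambda>x. \<bar>w x\<bar> powr p)" using w by (simp add: Lp_fun_def)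
  have Si: "integrable M (indicator S :: 'a \<Rightarrow> real)" using S by (simp add: integrable_indicator_iff)
  have I0: "0 \<le> (\<integral>x. \<bar>w x\<bar> * indicator S x \<partial>M)" by (intro integral_nonneg_AE) auto
  show ?thesis
  proof (cases "Lp_norm w = 0 \<or> measure M S = 0")
    case True
    have "AE x in M. \<bar>w x\<bar> * indicator S x = 0"
      using True
    proof
      assume "Lp_norm w = 0"
      hence "AE x in M. w x = 0" by (rule Lp_norm_eq_0_AE[OF w])
      thus ?thesis by (rule eventually_mono) simp
    next
      assume "measure M S = 0"
      hence "emeasure M S = 0" using S(2) emeasure_eq_ennreal_measure[of M S] by simp
      hence "S \<in> null_sets M" using S by (simp add: null_sets_def)
      hence "AE x in M. x \<notin> S" by (rule AE_not_in)
      thus ?thesis by (rule eventually_mono) simp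
    qed
    hence "(\<integral>x. \<bar>w x\<bar> * indicator S x \<partial>M) = 0"
      using ii by (subst integral_nonneg_eq_0_iff_AE) auto
    thus ?thesis by (simp add: Lp_norm_nonneg)
  next
    case False
    define N where "N = Lp_norm w"
    define m where "m = measure M S"
    have N: "0 < N" using False Lp_norm_nonneg by (auto simp: N_def less_le)
    have m: "0 < m" using False by (auto simp: m_def less_le)
    \<comment> \<open>the choice of \<open>e\<close> makes the two terms of the pointwise bound equal\<close>
    define e where "e = N / m powr (1/p)"
    have e: "0 < e" using N m by (simp add: e_def)
    have pt: "\<bar>w x\<bar> * indicator S x \<le> e * indicator S x + e powr (1 - p) * \<bar>w x\<bar> powr p" for x
      using abs_le_powr_bound[OF one_le_p e, of "w x"] e by (cases "x \<in> S") auto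
    have "(\<integral>x. \<bar>w x\<bar> * indicator S x \<partial>M) \<le> (\<integral>x. e * indicator S x + e powr (1 - p) * \<bar>w x\<bar> powr p \<partial>M)"
      using ii Si wi pt by (intro integral_mono) auto
    also have "\<dots> = e * m + e powr (1 - p) * N powr p"
      using Si wi S(1) by (simp add: m_def N_def Lp_norm_powr Int_absorb2 sets.sets_into_space)
    also have "e * m = N * m powr (1 - 1/p)"
      using m by (simp add: e_def powr_diff)
    also have "e powr (1 - p) * N powr p = N * m powr (1 - 1/p)"
    proof -
      have "e powr (1 - p) = N powr (1 - p) * (m powr (1/p)) powr (p - 1)"
        using N m unfolding e_def by (simp add: powr_divide powr_minus_divide[symmetric] powr_diff)
      also have "(m powr (1/p)) powr (p - 1) = m powr (1 - 1/p)"
        using p_pos by (simp add: powr_powr diff_divide_distrib)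
      finally have "e powr (1 - p) * N powr p = m powr (1 - 1/p) * (N powr (1 - p) * N powr p)" by simp
      also have "N powr (1 - p) * N powr p = N" using N by (simp add: powr_add[symmetric])
      finally show ?thesis by simp
    qed
    finally show ?thesis by (simp add: N_def m_def mult_ac)
  qed
qed

lemma set_integral_diff_le:
  assumes f: "Lp_fun f" and g: "Lp_fun g" and S: "S \<in> sets M" "emeasure M S < \<infinity>"
  shows "\<bar>(\<integral>x. f x * indicator S x \<partial>M) - (\<integral>x. g x * indicator S x \<partial>M)\<bar>
          \<le> 2 * measure M S powr (1 - 1/p) * Lp_norm (\<lambda>x. f x - g x)"
proof -
  have fg: "Lp_fun (\<lambda>x. f x - g x)" by (rule Minkowski_inequality_diff(1)[OF f g])
  have i1: "integrable M (\<lambda>x. f x * indicator S x)" by (rule integrable_mult_indicator[OF f S])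
  have i2: "integrable M (\<lambda>x. g x * indicator S x)" by (rule integrable_mult_indicator[OF g S])
  have "(\<integral>x. f x * indicator S x \<partial>M) - (\<integral>x. g x * indicator S x \<partial>M) = (\<integral>x. (f x - g x) * indicator S x \<partial>M)"
    using i1 i2 by (simp add: left_diff_distrib)
  also have "\<bar>\<dots>\<bar> \<le> (\<integral>x. \<bar>(f x - g x) * indicator S x\<bar> \<partial>M)" by (rule integral_abs_bound)
  also have "\<dots> = (\<integral>x. \<bar>f x - g x\<bar> * indicator S x \<partial>M)" by (simp add: abs_mult)
  also have "\<dots> \<le> 2 * measure M S powr (1 - 1/p) * Lp_norm (\<lambda>x. f x - g x)" by (rule L1_norm_on_le[OF fg S])
  finally show ?thesis .
qed

lemma Lp_fun_indicator:
  assumes S: "S \<in> sets M" "emeasure M S < \<infinity>"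
  shows "Lp_fun (\<lambda>x. c * indicator S x)" "Lp_norm (\<lambda>x. c * indicator S x) = \<bar>c\<bar> * measure M S powr (1/p)"
proof -
  have e: "\<bar>c * indicator S x\<bar> powr p = \<bar>c\<bar> powr p * indicator S x" for x
    using p_pos by (cases "x \<in> S") (auto simp: abs_mult)
  have Si: "integrable M (indicator S :: 'a \<Rightarrow> real)" using S by (simp add: integrable_indicator_iff)
  show "Lp_fun (\<lambda>x. c * indicator S x)" unfolding Lp_fun_def e using Si S by auto
  have "Lp_norm (\<lambda>x. c * indicator S x) = (\<bar>c\<bar> powr p * measure M S) powr (1/p)"
    unfolding Lp_norm_def e using Si S(1) by (simp add: Int_absorb2 sets.sets_into_space)
  also have "\<dots> = \<bar>c\<bar> * measure M S powr (1/p)"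
    using p_pos by (simp add: powr_mult powr_powr)
  finally show "Lp_norm (\<lambda>x. c * indicator S x) = \<bar>c\<bar> * measure M S powr (1/p)" .
qed


lemma Lp_norm_mult: "Lp_norm (\<lambda>x. c * f x) = \<bar>c\<bar> * Lp_norm f"
proof -
  have e: "\<bar>c * f x\<bar> powr p = \<bar>c\<bar> powr p * \<bar>f x\<bar> powr p" for x
    by (simp add: abs_mult powr_mult)
  have "Lp_norm (\<lambda>x. c * f x) = (\<bar>c\<bar> powr p * (\<integral>x. \<bar>f x\<bar> powr p \<partial>M)) powr (1/p)"
    unfolding Lp_norm_def e by simp
  also have "\<dots> = (\<bar>c\<bar> powr p) powr (1/p) * Lp_norm f"
    unfolding Lp_norm_def using Lp_integral_nonneg[of f] by (simp add: powr_mult)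
  also have "(\<bar>c\<bar> powr p) powr (1/p) = \<bar>c\<bar>" using p_pos by (simp add: powr_powr)
  finally show ?thesis .
qed

lemma Lp_fun_mult: "Lp_fun f \<Longrightarrow> Lp_fun (\<lambda>x. c * f x)"
proof -
  assume f: "Lp_fun f"
  have e: "\<bar>c * f x\<bar> powr p = \<bar>c\<bar> powr p * \<bar>f x\<bar> powr p" for x
    by (simp add: abs_mult powr_mult)
  have fm: "f \<in> borel_measurable M" using f by (simp add: Lp_fun_def)
  have "(\<lambda>x. c * f x) \<in> borel_measurable M" using fm by measurable
  thus ?thesis using f unfolding Lp_fun_def e by simp
qed

lemma Lp_norm_reverse_triangle:
  assumes f: "Lp_fun f" and g: "Lp_fun g"
  shows "\<bar>Lp_norm f - Lp_norm g\<bar> \<le> Lp_norm (\<lambda>x. f x - g x)"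
proof -
  have fg: "Lp_fun (\<lambda>x. f x - g x)" by (rule Minkowski_inequality_diff(1)[OF f g])
  have gf: "Lp_fun (\<lambda>x. g x - f x)" by (rule Minkowski_inequality_diff(1)[OF g f])
  have "Lp_norm f \<le> Lp_norm (\<lambda>x. f x - g x) + Lp_norm g"
    using Minkowski_inequality(2)[OF fg g] by simp
  moreover have "Lp_norm g \<le> Lp_norm (\<lambda>x. g x - f x) + Lp_norm f"
    using Minkowski_inequality(2)[OF gf f] by simp
  ultimately show ?thesis using Lp_norm_diff_commute[of f g] by linarith
qed

end

sublocale Lp_space \<subseteq> LM: Metric_space Lp dLp by (rule Metric_space_Lp)

section \<open>Averages over sets of finite measure\<close>

lemma set_average_near_const:
  fixes g :: "'a \<Rightarrow> real"
  assumes S: "S \<in> sets M" "emeasure M S < \<infinity>" "0 < measure M S"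
    and ig: "integrable M (\<lambda>x. g x * indicator S x)"
    and ae: "AE y in M. y \<in> S \<longrightarrow> \<bar>g y - c\<bar> \<le> e"
  shows "\<bar>set_average M S g - c\<bar> \<le> e"
proof -
  have int_const: "(\<integral>x. c' * indicator S x \<partial>M) = c' * measure M S" for c' :: real
    using S by (simp add: less_top[symmetric])
  have i_const: "integrable M (\<lambda>x. c' * indicator S x :: real)" for c'
    using S by (simp add: less_top[symmetric])
  have "\<bar>(\<integral>x. g x * indicator S x \<partial>M) - c * measure M S\<bar> = \<bar>\<integral>x. (g x - c) * indicator S x \<partial>M\<bar>"
    using ig i_const int_const[of c] S(1) by (simp add: left_diff_distrib Int_absorb2 sets.sets_into_space)
  also have "\<dots> \<le> (\<integral>x. \<bar>(g x - c) * indicator S x\<bar> \<partial>M)" by (rule integral_abs_bound)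
  also have "\<dots> \<le> (\<integral>x. e * indicator S x \<partial>M)"
  proof (rule integral_mono_AE)
    show "integrable M (\<lambda>x. \<bar>(g x - c) * indicator S x\<bar>)"
      using ig i_const by (simp add: left_diff_distrib)
    show "AE x in M. \<bar>(g x - c) * indicator S x\<bar> \<le> e * indicator S x"
      using ae by (rule eventually_mono) (auto simp: indicator_def abs_mult)
  qed (rule i_const)
  also have "\<dots> = e * measure M S" by (rule int_const)
  finally have "\<bar>(\<integral>x. g x * indicator S x \<partial>M) - c * measure M S\<bar> \<le> e * measure M S" .
  moreover have "set_average M S g - c = ((\<integral>x. g x * indicator S x \<partial>M) - c * measure M S) / measure M S"
    using S(3) by (simp add: set_average_def field_simps)
  ultimately show ?thesis using S(3) by (simp add: divide_le_eq)
qed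

context Lp_space begin

definition avg_lip :: "'a set \<Rightarrow> real" where
  "avg_lip S = 2 * measure M S powr (1 - 1/p) / measure M S"

lemma avg_lip_nonneg: "0 \<le> avg_lip S" by (simp add: avg_lip_def)

lemma set_average_lipschitz:
  assumes S: "S \<in> sets M" "emeasure M S < \<infinity>" and f: "Lp_fun f" and g: "Lp_fun g"
  shows "\<bar>set_average M S f - set_average M S g\<bar> \<le> avg_lip S * Lp_norm (\<lambda>x. f x - g x)"
proof -
  have "\<bar>set_average M S f - set_average M S g\<bar>
      = \<bar>(\<integral>x. f x * indicator S x \<partial>M) - (\<integral>x. g x * indicator S x \<partial>M)\<bar> / measure M S"
    unfolding set_average_def by (simp add: diff_divide_distrib[symmetric])
  also have "\<dots> \<le> 2 * measure M S powr (1 - 1/p) * Lp_norm (\<lambda>x. f x - g x) / measure M S"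
    by (intro divide_right_mono set_integral_diff_le[OF f g S]) auto
  finally show ?thesis by (simp add: avg_lip_def)
qed

lemma set_average_class_rep_lipschitz:
  assumes S: "S \<in> sets M" "emeasure M S < \<infinity>" and U: "U \<in> Lp" and V: "V \<in> Lp"
  shows "\<bar>set_average M S (class_rep U) - set_average M S (class_rep V)\<bar> \<le> avg_lip S * dLp U V"
  using set_average_lipschitz[OF S Lp_fun_class_rep[OF U] Lp_fun_class_rep[OF V]]
  by (simp add: Lp_dist_class_rep)

text \<open>No finiteness of \<open>B\<close> is needed: a set \<open>S\<close> with \<open>0 < measure M S\<close> has finite measure,
  because \<open>measure\<close> is \<open>0\<close> on sets of infinite measure.\<close>

lemma closedin_small_oscillation: "closedin LM.mtopology (small_oscillation M p B)"
  unfolding LM.closedin_metric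
proof safe
  show "\<And>x. x \<in> small_oscillation M p B \<Longrightarrow> x \<in> Lp" by (simp add: small_oscillation_def)
next
  fix U assume U: "U \<in> Lp" and nA: "U \<notin> small_oscillation M p B"
  then obtain S1 S2 where S: "S1 \<in> sets M" "S2 \<in> sets M" "S1 \<subseteq> B" "S2 \<subseteq> B"
    "0 < measure M S1" "0 < measure M S2"
    and gt: "1 < \<bar>set_average M S1 (class_rep U) - set_average M S2 (class_rep U)\<bar>"
    unfolding small_oscillation_def by auto
  have fin: "emeasure M S1 < \<infinity>" "emeasure M S2 < \<infinity>"
    using S(5,6) measure_zero_top[of M S1] measure_zero_top[of M S2] top.not_eq_extremum by fastforce+
  define c where "c = avg_lip S1 + avg_lip S2 + 1"
  have c: "0 < c" using avg_lip_nonneg[of S1] avg_lip_nonneg[of S2] by (simp add: c_def)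
  define r where "r = (\<bar>set_average M S1 (class_rep U) - set_average M S2 (class_rep U)\<bar> - 1) / c"
  have r: "0 < r" using gt c by (simp add: r_def)
  have "V \<notin> small_oscillation M p B" if V: "V \<in> LM.mball U r" for V
  proof
    assume V_osc: "V \<in> small_oscillation M p B"
    have VC: "V \<in> Lp" and dUV: "dLp U V < r" using V by auto
    have "\<bar>set_average M S1 (class_rep V) - set_average M S2 (class_rep V)\<bar> \<le> 1"
      using V_osc S by (auto simp: small_oscillation_def)
    moreover have "\<bar>set_average M S1 (class_rep U) - set_average M S1 (class_rep V)\<bar> \<le> avg_lip S1 * dLp U V"
      by (rule set_average_class_rep_lipschitz[OF S(1) fin(1) U VC])
    moreover have "\<bar>set_average M S2 (class_rep U) - set_average M S2 (class_rep V)\<bar> \<le> avg_lip S2 * dLp U V"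
      by (rule set_average_class_rep_lipschitz[OF S(2) fin(2) U VC])
    moreover have "(avg_lip S1 + avg_lip S2) * dLp U V \<le> (avg_lip S1 + avg_lip S2) * r"
      using dUV avg_lip_nonneg[of S1] avg_lip_nonneg[of S2] by (intro mult_left_mono) auto
    moreover have "c * r = \<bar>set_average M S1 (class_rep U) - set_average M S2 (class_rep U)\<bar> - 1"
      using c by (simp add: r_def)
    ultimately show False using r by (simp add: c_def algebra_simps)
  qed
  then show "\<exists>r>0. disjnt (small_oscillation M p B) (LM.mball U r)"
    using r by (auto simp: disjnt_def)
qed


lemma small_oscillation_if_near_const:
  assumes U: "U \<in> Lp" and f: "f \<in> U" and near: "AE y in M. y \<in> B \<longrightarrow> \<bar>f y - c\<bar> \<le> 1/2"
  shows "U \<in> small_oscillation M p B"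
proof -
  have near_avg: "\<bar>set_average M S (class_rep U) - c\<bar> \<le> 1/2"
    if S: "S \<in> sets M" "S \<subseteq> B" "0 < measure M S" for S
  proof (rule set_average_near_const[OF S(1) _ S(3)])
    show fin: "emeasure M S < \<infinity>"
      using S(3) measure_zero_top[of M S] top.not_eq_extremum by fastforce
    show "integrable M (\<lambda>x. class_rep U x * indicator S x)"
      by (rule integrable_mult_indicator[OF Lp_fun_class_rep[OF U] S(1) fin])
    show "AE y in M. y \<in> S \<longrightarrow> \<bar>class_rep U y - c\<bar> \<le> 1/2"
      using near Lp_carrier_mem(2)[OF U f] by eventually_elim (use S(2) in auto)
  qed
  have "\<bar>set_average M S1 (class_rep U) - set_average M S2 (class_rep U)\<bar> \<le> 1"
    if "S1 \<in> sets M" "S1 \<subseteq> B" "0 < measure M S1" "S2 \<in> sets M" "S2 \<subseteq> B" "0 < measure M S2"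
    for S1 S2
    using near_avg[OF that(1-3)] near_avg[OF that(4-6)] by linarith
  then show ?thesis
    using U unfolding small_oscillation_def by blast
qed

end

section \<open>Sets of small oscillation are \<open>Z\<close>-sets\<close>

locale Lp_pieces = Lp_space M p for M :: "'a measure" and p +
  fixes B :: "'a set" and P :: "nat \<Rightarrow> 'a set"
  assumes B_sets: "B \<in> sets M" and B_finite: "emeasure M B < \<infinity>"
    and P_sets: "\<And>k. P k \<in> sets M" and P_subset_B: "\<And>k. P k \<subseteq> B"
    and P_pos: "\<And>k. 0 < emeasure M (P k)" and disjoint_P: "disjoint_family P"
begin

lemma finite_measure_subset: "S \<subseteq> B \<Longrightarrow> S \<in> sets M \<Longrightarrow> emeasure M S < \<infinity>"
  using B_sets B_finite emeasure_mono[of S B M] by (meson le_less_trans)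

text \<open>The piece \<open>P 0\<close> only serves to measure the level to be imposed; it is imposed on the
  remaining pieces \<open>Q k\<close>, whose union is \<open>W\<close>, from some tail union \<open>R k\<close> on.\<close>

definition Q :: "nat \<Rightarrow> 'a set" where "Q k = P (Suc k)"
definition W :: "'a set" where "W = (\<Union>k. Q k)"
definition R :: "nat \<Rightarrow> 'a set" where "R k = (\<Union>j\<in>{k..}. Q j)"
definition norm_W :: real where "norm_W = measure M W powr (1/p)"

lemma Q_sets: "Q k \<in> sets M" by (simp add: Q_def P_sets)
lemma W_sets: "W \<in> sets M" unfolding W_def using Q_sets by blast
lemma R_sets: "R k \<in> sets M" unfolding R_def using Q_sets by blast
lemma Q_subset_B: "Q k \<subseteq> B" by (simp add: Q_def P_subset_B)
lemma W_subset_B: "W \<subseteq> B" unfolding W_def using Q_subset_B by blast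
lemma R_subset_W: "R k \<subseteq> W" unfolding R_def W_def by blast
lemma W_finite: "emeasure M W < \<infinity>" by (rule finite_measure_subset[OF W_subset_B W_sets])
lemma norm_W_nonneg: "0 \<le> norm_W" by (simp add: norm_W_def)

lemma Q_disjoint: "x \<in> Q j \<Longrightarrow> x \<in> Q k \<Longrightarrow> j = k"
  using disjoint_P unfolding Q_def disjoint_family_on_def by blast

lemma P0_disjoint_W: "x \<in> P 0 \<Longrightarrow> x \<notin> W"
  using disjoint_P unfolding W_def Q_def disjoint_family_on_def by blast

lemma eventually_notin_R: "\<forall>\<^sub>F k in sequentially. x \<notin> R k"
proof (cases "\<exists>j. x \<in> Q j")
  case True
  then obtain j where j: "x \<in> Q j" by blast
  have "x \<notin> R k" if "Suc j \<le> k" for k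
    using that Q_disjoint[OF j] unfolding R_def by force
  then show ?thesis unfolding eventually_sequentially by blast
next
  case False
  then show ?thesis unfolding R_def by simp
qed

lemma measure_pos: assumes "S \<in> sets M" "S \<subseteq> B" "0 < emeasure M S" shows "0 < measure M S"
proof -
  have "emeasure M S < \<infinity>" using finite_measure_subset assms by blast
  then have "emeasure M S = ennreal (measure M S)" using emeasure_eq_ennreal_measure[of M S] by simp
  then show ?thesis using assms(3) by simp
qed

lemma measure_P_pos: "0 < measure M (P k)" using measure_pos[OF P_sets P_subset_B P_pos] .
lemma measure_Q_pos: "0 < measure M (Q k)" by (simp add: Q_def measure_P_pos)

lemma Lp_norm_abs_add_indicator_W:
  assumes f: "Lp_fun f"
  shows "Lp_fun (\<lambda>x. \<bar>f x\<bar> + \<bar>c\<bar> * indicator W x)"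
    "Lp_norm (\<lambda>x. \<bar>f x\<bar> + \<bar>c\<bar> * indicator W x) \<le> Lp_norm f + \<bar>c\<bar> * norm_W"
proof -
  have W: "Lp_fun (\<lambda>x. \<bar>c\<bar> * indicator W x)" "Lp_norm (\<lambda>x. \<bar>c\<bar> * indicator W x) = \<bar>c\<bar> * norm_W"
    using Lp_fun_indicator[OF W_sets W_finite, of "\<bar>c\<bar>"] by (simp_all add: norm_W_def)
  show "Lp_fun (\<lambda>x. \<bar>f x\<bar> + \<bar>c\<bar> * indicator W x)"
    by (rule Minkowski_inequality(1)[OF Lp_fun_abs[OF f] W(1)])
  show "Lp_norm (\<lambda>x. \<bar>f x\<bar> + \<bar>c\<bar> * indicator W x) \<le> Lp_norm f + \<bar>c\<bar> * norm_W"
    using Minkowski_inequality(2)[OF Lp_fun_abs[OF f] W(1)] by (simp add: W(2) Lp_norm_abs)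
qed

end

locale Lp_pieces_cover = Lp_pieces M p B P for M :: "'a measure" and p B P +
  fixes Uc :: "('a \<Rightarrow> real) set set set"
  assumes cover_open: "\<And>V. V \<in> Uc \<Longrightarrow> openin LM.mtopology V" and cover_Lp: "\<Union>Uc = Lp"
begin

text \<open>Radii are capped at 1 so that the supremum exists.\<close>

definition cover_radii :: "('a \<Rightarrow> real) set \<Rightarrow> real set" where
  "cover_radii u = {r. 0 < r \<and> r \<le> 1 \<and> (\<exists>V\<in>Uc. LM.mball u r \<subseteq> V)}"

definition cover_radius :: "('a \<Rightarrow> real) set \<Rightarrow> real" where
  "cover_radius u = Sup (cover_radii u)"

lemma cover_radii_bdd: "bdd_above (cover_radii u)"
  unfolding cover_radii_def bdd_above_def by auto

lemma cover_radii_nonempty: assumes u: "u \<in> Lp" shows "\<exists>r\<in>cover_radii u. 0 < r"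
proof -
  obtain V where V: "V \<in> Uc" "u \<in> V" using u cover_Lp by blast
  then obtain r where r: "0 < r" "LM.mball u r \<subseteq> V"
    using cover_open[OF V(1)] LM.openin_mtopology by blast
  then have "min r 1 \<in> cover_radii u"
    unfolding cover_radii_def using V LM.mball_subset_concentric[of "min r 1" r u] by auto
  then show ?thesis using r by (intro bexI[of _ "min r 1"]) auto
qed

lemma cover_radius_pos: "u \<in> Lp \<Longrightarrow> 0 < cover_radius u"
  using cover_radii_nonempty cover_radii_bdd unfolding cover_radius_def
  by (meson cSup_upper less_le_trans)

lemma cover_radius_mball: assumes u: "u \<in> Lp" shows "\<exists>V\<in>Uc. LM.mball u (cover_radius u / 2) \<subseteq> V"
proof -
  have "cover_radius u / 2 < Sup (cover_radii u)" using cover_radius_pos[OF u] by (simp add: cover_radius_def)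
  then obtain r where r: "r \<in> cover_radii u" "cover_radius u / 2 < r"
    using cover_radii_nonempty[OF u] by (metis less_cSupE empty_iff)
  then obtain V where "V \<in> Uc" "LM.mball u r \<subseteq> V" by (auto simp: cover_radii_def)
  then show ?thesis using r LM.mball_subset_concentric[of "cover_radius u / 2" r u] by auto
qed

lemma cover_radius_le:
  assumes u: "u \<in> Lp" and v: "v \<in> Lp" shows "cover_radius v \<le> cover_radius u + dLp u v"
proof (rule ccontr)
  assume "\<not> cover_radius v \<le> cover_radius u + dLp u v"
  then have "cover_radius u + dLp u v < Sup (cover_radii v)" by (simp add: cover_radius_def)
  then obtain r where r: "r \<in> cover_radii v" "cover_radius u + dLp u v < r"
    using cover_radii_nonempty[OF v] by (metis less_cSupE empty_iff)
  then obtain V where V: "V \<in> Uc" "LM.mball v r \<subseteq> V" and r1: "r \<le> 1" by (auto simp: cover_radii_def)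
  have "LM.mball u (r - dLp u v) \<subseteq> LM.mball v r"
    using v by (intro LM.mball_subset) auto
  moreover have "r - dLp u v \<le> 1" using r1 LM.nonneg[of u v] by linarith
  ultimately have "r - dLp u v \<in> cover_radii u"
    unfolding cover_radii_def using r V cover_radius_pos[OF u] by auto
  then have "r - dLp u v \<le> cover_radius u" unfolding cover_radius_def using cover_radii_bdd by (rule cSup_upper)
  then show False using r by simp
qed

lemma cover_radius_lipschitz:
  assumes u: "u \<in> Lp" and v: "v \<in> Lp" shows "\<bar>cover_radius u - cover_radius v\<bar> \<le> dLp u v"
  using cover_radius_le[OF u v] cover_radius_le[OF v u] LM.commute[of u v] by simp

text \<open>The map \<open>push\<close> overwrites \<open>u\<close> on \<open>Q k\<close> by the convex combination with weight \<open>mix_coeff k u\<close>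
  of \<open>u\<close> and the constant \<open>level u\<close>, which lies \<open>2\<close> above the average of \<open>u\<close> over \<open>P 0\<close>. The
  weight is \<open>1\<close> as soon as the \<open>L\<^sup>p\<close>-norm \<open>tail k u\<close> of \<open>u - level u\<close> beyond \<open>k\<close> is below
  \<open>cover_radius u / 4\<close> and \<open>0\<close> while it is above \<open>cover_radius u / 2\<close>: hence \<open>push u\<close> stays
  within \<open>cover_radius u / 2\<close> of \<open>u\<close>, but equals \<open>level u\<close> on some whole piece.\<close>

definition level :: "('a \<Rightarrow> real) set \<Rightarrow> real" where
  "level u = set_average M (P 0) (class_rep u) + 2"

definition dev :: "('a \<Rightarrow> real) set \<Rightarrow> 'a \<Rightarrow> real" where
  "dev u x = (class_rep u x - level u) * indicator W x"

definition tail :: "nat \<Rightarrow> ('a \<Rightarrow> real) set \<Rightarrow> real" where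
  "tail k u = Lp_norm (\<lambda>x. dev u x * indicator (R k) x)"

definition mix_coeff :: "nat \<Rightarrow> ('a \<Rightarrow> real) set \<Rightarrow> real" where
  "mix_coeff k u = max 0 (min 1 (2 - 4 * tail k u / cover_radius u))"

definition mix :: "('a \<Rightarrow> real) set \<Rightarrow> 'a \<Rightarrow> real" where
  "mix u x = (\<Sum>k. mix_coeff k u * indicator (Q k) x)"

definition pushed :: "('a \<Rightarrow> real) set \<Rightarrow> 'a \<Rightarrow> real" where
  "pushed u x = class_rep u x + mix u x * (level u - class_rep u x)"

definition push :: "('a \<Rightarrow> real) set \<Rightarrow> ('a \<Rightarrow> real) set" where
  "push u = ae_class M (pushed u)"

lemma mix_coeff_bounds: "0 \<le> mix_coeff k u" "mix_coeff k u \<le> 1"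
  by (auto simp: mix_coeff_def)

lemma mix_Q: assumes x: "x \<in> Q k" shows "mix u x = mix_coeff k u"
proof -
  have "mix_coeff j u * indicator (Q j) x = (if j = k then mix_coeff k u else 0)" for j
  proof (cases "j = k")
    case False
    then have "x \<notin> Q j" using Q_disjoint[OF _ x] by blast
    then show ?thesis using False by simp
  qed (use x in simp)
  then have "(\<lambda>j. mix_coeff j u * indicator (Q j) x) sums mix_coeff k u"
    by (simp only:) (rule sums_single)
  then show ?thesis unfolding mix_def by (rule sums_unique[symmetric])
qed

lemma mix_outside_W: assumes x: "x \<notin> W" shows "mix u x = 0"
proof -
  have "x \<notin> Q j" for j using x unfolding W_def by blast
  then have "(\<lambda>j. mix_coeff j u * indicator (Q j) x) = (\<lambda>j. 0)" by simp
  then show ?thesis unfolding mix_def by simp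
qed

lemma mix_bounds: "0 \<le> mix u x" "mix u x \<le> 1"
proof -
  have "0 \<le> mix u x \<and> mix u x \<le> 1"
  proof (cases "x \<in> W")
    case True
    then obtain k where "x \<in> Q k" unfolding W_def by blast
    then show ?thesis using mix_coeff_bounds[of k u] by (simp add: mix_Q)
  qed (simp add: mix_outside_W)
  then show "0 \<le> mix u x" "mix u x \<le> 1" by auto
qed

lemma mix_measurable: "mix u \<in> borel_measurable M"
  unfolding mix_def using Q_sets
  by (intro borel_measurable_suminf borel_measurable_times borel_measurable_const borel_measurable_indicator)

lemma Lp_fun_dev: assumes u: "u \<in> Lp" shows "Lp_fun (dev u)"
proof (rule Lp_dominated(1)[OF Lp_norm_abs_add_indicator_W(1)[OF Lp_fun_class_rep[OF u]]])
  show "dev u \<in> borel_measurable M"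
    unfolding dev_def using class_rep_measurable[OF u] W_sets by measurable
  show "\<bar>dev u x\<bar> \<le> \<bar>\<bar>class_rep u x\<bar> + \<bar>level u\<bar> * indicator W x\<bar>" for x
    by (auto simp: dev_def indicator_def)
qed

lemma dev_measurable: "u \<in> Lp \<Longrightarrow> dev u \<in> borel_measurable M"
  using Lp_fun_dev by (simp add: Lp_fun_def)

lemma Lp_fun_dev_tail:
  assumes u: "u \<in> Lp"
  shows "Lp_fun (\<lambda>x. dev u x * indicator (R k) x)" "tail k u \<le> Lp_norm (dev u)"
proof -
  have "(\<lambda>x. dev u x * indicator (R k) x) \<in> borel_measurable M"
    using dev_measurable[OF u] R_sets by measurable
  from Lp_dominated[OF Lp_fun_dev[OF u] this]
  show "Lp_fun (\<lambda>x. dev u x * indicator (R k) x)" "tail k u \<le> Lp_norm (dev u)"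
    unfolding tail_def by (auto simp: indicator_def)
qed

lemma pushed_measurable: assumes u: "u \<in> Lp" shows "pushed u \<in> borel_measurable M"
  unfolding pushed_def using class_rep_measurable[OF u] mix_measurable[of u] by measurable

lemma Lp_fun_pushed: assumes u: "u \<in> Lp" shows "Lp_fun (pushed u)"
proof (rule Lp_dominated(1)[OF Lp_norm_abs_add_indicator_W(1)[OF Lp_fun_class_rep[OF u]] pushed_measurable[OF u]])
  fix x
  show "\<bar>pushed u x\<bar> \<le> \<bar>\<bar>class_rep u x\<bar> + \<bar>level u\<bar> * indicator W x\<bar>"
  proof (cases "x \<in> W")
    case True
    have "pushed u x = (1 - mix u x) * class_rep u x + mix u x * level u + 0 * 0"
      by (simp add: pushed_def algebra_simps)
    then show ?thesis
      using abs_convex_comb_le[OF mix_bounds, of u x "class_rep u x" "level u" 0 0] True by simp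
  qed (simp add: pushed_def mix_outside_W)
qed

lemma push_in_Lp: "u \<in> Lp \<Longrightarrow> push u \<in> Lp"
  unfolding push_def by (rule ae_class_in_Lp[OF Lp_fun_pushed])

lemma pushed_in_push: "u \<in> Lp \<Longrightarrow> pushed u \<in> push u"
  unfolding push_def by (rule ae_class_self[OF pushed_measurable])

lemma class_rep_push: "u \<in> Lp \<Longrightarrow> AE x in M. class_rep (push u) x = pushed u x"
  unfolding push_def by (rule class_rep_ae_class[OF Lp_fun_pushed])

lemma tail_small: assumes u: "u \<in> Lp" and e: "0 < e" shows "\<exists>k. tail k u < e"
proof -
  define s where "s k x = \<bar>dev u x * indicator (R k) x\<bar> powr p" for k x
  have "(\<lambda>k. integral\<^sup>L M (s k)) \<longlonglongrightarrow> integral\<^sup>L M (\<lambda>x. 0)"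
  proof (rule integral_dominated_convergence)
    show "integrable M (\<lambda>x. \<bar>dev u x\<bar> powr p)" using Lp_fun_dev[OF u] by (simp add: Lp_fun_def)
    show "s k \<in> borel_measurable M" for k
      unfolding s_def using dev_measurable[OF u] R_sets by measurable
    show "AE x in M. (\<lambda>k. s k x) \<longlonglongrightarrow> 0"
    proof (rule AE_I2, rule tendsto_eventually)
      show "\<forall>\<^sub>F k in sequentially. s k x = 0" for x
        using eventually_notin_R[of x] by eventually_elim (use p_pos in \<open>simp add: s_def\<close>)
    qed
    show "AE x in M. norm (s k x) \<le> \<bar>dev u x\<bar> powr p" for k
      unfolding s_def using p_pos by (intro AE_I2) (auto simp: indicator_def)
  qed simp
  moreover have "0 < e powr p" using e by simp
  ultimately have "\<forall>\<^sub>F k in sequentially. integral\<^sup>L M (s k) < e powr p" by (simp add: order_tendstoD)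
  then obtain k where "integral\<^sup>L M (s k) < e powr p" by (auto simp: eventually_sequentially)
  then have "tail k u < e" unfolding tail_def s_def using e by (subst Lp_norm_less_iff) simp_all
  then show ?thesis by blast
qed

lemma mix_coeff_eq_1: assumes u: "u \<in> Lp" shows "\<exists>k. mix_coeff k u = 1"
proof -
  obtain k where "tail k u < cover_radius u / 4"
    using tail_small[OF u, of "cover_radius u / 4"] cover_radius_pos[OF u] by auto
  then have "4 * tail k u / cover_radius u \<le> 1" using cover_radius_pos[OF u] by (simp add: field_simps)
  then have "mix_coeff k u = 1" by (simp add: mix_coeff_def)
  then show ?thesis ..
qed

lemma dLp_push_less: assumes u: "u \<in> Lp" shows "dLp u (push u) < cover_radius u / 2"
proof -
  have ex: "\<exists>k. tail k u < cover_radius u / 2"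
    using tail_small[OF u, of "cover_radius u / 2"] cover_radius_pos[OF u] by auto
  \<comment> \<open>on the pieces before the first \<open>K\<close> with a small tail, \<open>push u\<close> still agrees with \<open>u\<close>\<close>
  define K where "K = (LEAST k. tail k u < cover_radius u / 2)"
  have tail_K: "tail K u < cover_radius u / 2" unfolding K_def using ex by (rule LeastI_ex)
  have mix_0: "mix_coeff j u = 0" if "j < K" for j
  proof -
    have "\<not> tail j u < cover_radius u / 2" using not_less_Least[OF that[unfolded K_def]] .
    then have "2 \<le> 4 * tail j u / cover_radius u" using cover_radius_pos[OF u] by (simp add: field_simps)
    then show ?thesis by (simp add: mix_coeff_def)
  qed
  have "\<bar>class_rep u x - pushed u x\<bar> \<le> \<bar>dev u x * indicator (R K) x\<bar>" for x
  proof -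
    have diff: "\<bar>class_rep u x - pushed u x\<bar> = mix u x * \<bar>class_rep u x - level u\<bar>"
      using mix_bounds[of u x] by (simp add: pushed_def abs_mult abs_minus_commute)
    consider j where "x \<in> Q j" "j < K" | "x \<in> R K" | "x \<notin> W"
      unfolding R_def W_def by (metis UN_iff atLeast_iff not_le)
    then show ?thesis
    proof cases
      case 2
      then have "x \<in> W" using R_subset_W by blast
      then show ?thesis using 2 diff mix_bounds[of u x] by (simp add: dev_def mult_left_le_one_le)
    qed (use diff mix_Q mix_0 mix_outside_W in auto)
  qed
  then have "Lp_norm (\<lambda>x. class_rep u x - pushed u x) \<le> tail K u"
    unfolding tail_def using class_rep_measurable[OF u] pushed_measurable[OF u]
    by (intro Lp_dominated(2)[OF Lp_fun_dev_tail(1)[OF u]]) auto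
  then show ?thesis
    using tail_K Lp_dist_eq_Lp_norm[OF u push_in_Lp[OF u] class_rep_mem[OF u] pushed_in_push[OF u]]
    by simp
qed

lemma push_notin_small_oscillation: assumes u: "u \<in> Lp" shows "push u \<notin> small_oscillation M p B"
proof
  assume push_osc: "push u \<in> small_oscillation M p B"
  obtain k where k: "mix_coeff k u = 1" using mix_coeff_eq_1[OF u] by blast
  have avg_push: "set_average M S (class_rep (push u)) = set_average M S (pushed u)"
    if S: "S \<in> sets M" for S
  proof -
    have "(\<integral>x. class_rep (push u) x * indicator S x \<partial>M) = (\<integral>x. pushed u x * indicator S x \<partial>M)"
      using class_rep_measurable[OF push_in_Lp[OF u]] pushed_measurable[OF u] S
      by (intro integral_cong_AE) (auto intro: eventually_mono[OF class_rep_push[OF u]])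
    then show ?thesis by (simp add: set_average_def)
  qed
  have "(\<lambda>x. pushed u x * indicator (Q k) x) = (\<lambda>x. level u * indicator (Q k) x)"
    using mix_Q[of _ k u] k by (auto simp: pushed_def indicator_def)
  then have "(\<integral>x. pushed u x * indicator (Q k) x \<partial>M) = level u * measure M (Q k)"
    using finite_measure_subset[OF Q_subset_B Q_sets] Q_sets[of k]
    by (simp add: less_top[symmetric] Int_absorb2 sets.sets_into_space)
  then have avg_Q: "set_average M (Q k) (pushed u) = level u"
    using measure_Q_pos[of k] by (simp add: set_average_def)
  have "(\<lambda>x. pushed u x * indicator (P 0) x) = (\<lambda>x. class_rep u x * indicator (P 0) x)"
    using mix_outside_W[OF P0_disjoint_W] by (auto simp: pushed_def indicator_def)
  then have avg_P0: "set_average M (P 0) (pushed u) = level u - 2"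
    by (simp add: set_average_def level_def)
  have "\<bar>set_average M (Q k) (class_rep (push u)) - set_average M (P 0) (class_rep (push u))\<bar> \<le> 1"
    using push_osc Q_sets[of k] P_sets[of 0] Q_subset_B[of k] P_subset_B[of 0] measure_Q_pos[of k]
      measure_P_pos[of 0]
    unfolding small_oscillation_def by blast
  then show False using avg_push[OF Q_sets] avg_push[OF P_sets] avg_Q avg_P0 by simp
qed

definition level_lip :: real where "level_lip = avg_lip (P 0)"

definition dev_bound :: "('a \<Rightarrow> real) set \<Rightarrow> real" where
  "dev_bound u = Lp_norm (class_rep u) + 1 + (\<bar>level u\<bar> + level_lip) * norm_W"

definition mix_lip :: "('a \<Rightarrow> real) set \<Rightarrow> real" where
  "mix_lip u = 4 * ((1 + level_lip * norm_W) / cover_radius u + 2 * dev_bound u / (cover_radius u)\<^sup>2)"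

lemma level_lip_nonneg: "0 \<le> level_lip" by (simp add: level_lip_def avg_lip_nonneg)

lemma dev_bound_nonneg: "0 \<le> dev_bound u"
  unfolding dev_bound_def using Lp_norm_nonneg[of "class_rep u"] norm_W_nonneg level_lip_nonneg by simp

lemma mix_lip_nonneg: "u \<in> Lp \<Longrightarrow> 0 \<le> mix_lip u"
  unfolding mix_lip_def using cover_radius_pos[of u] dev_bound_nonneg[of u] level_lip_nonneg norm_W_nonneg
  by simp

lemma level_lipschitz: "u \<in> Lp \<Longrightarrow> v \<in> Lp \<Longrightarrow> \<bar>level u - level v\<bar> \<le> level_lip * dLp u v"
  using set_average_class_rep_lipschitz[OF P_sets[of 0] finite_measure_subset[OF P_subset_B P_sets]]
  by (simp add: level_def level_lip_def)

lemma Lp_norm_dev_le: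
  assumes u: "u \<in> Lp" and v: "v \<in> Lp" and d1: "dLp u v \<le> 1"
  shows "Lp_norm (dev v) \<le> dev_bound u"
proof -
  have "Lp_norm (dev v) \<le> Lp_norm (\<lambda>x. \<bar>class_rep v x\<bar> + \<bar>level v\<bar> * indicator W x)"
    by (rule Lp_dominated(2)[OF Lp_norm_abs_add_indicator_W(1)[OF Lp_fun_class_rep[OF v]] dev_measurable[OF v]])
      (auto simp: dev_def indicator_def)
  also have "\<dots> \<le> Lp_norm (class_rep v) + \<bar>level v\<bar> * norm_W"
    by (rule Lp_norm_abs_add_indicator_W(2)[OF Lp_fun_class_rep[OF v]])
  also have "\<dots> \<le> (Lp_norm (class_rep u) + 1) + (\<bar>level u\<bar> + level_lip) * norm_W"
  proof (intro add_mono mult_right_mono norm_W_nonneg)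
    show "Lp_norm (class_rep v) \<le> Lp_norm (class_rep u) + 1"
      using Lp_norm_reverse_triangle[OF Lp_fun_class_rep[OF v] Lp_fun_class_rep[OF u]] d1
        LM.commute[of u v] by (simp add: Lp_dist_class_rep)
    show "\<bar>level v\<bar> \<le> \<bar>level u\<bar> + level_lip"
      using level_lipschitz[OF u v] d1 level_lip_nonneg mult_left_le[of "dLp u v" level_lip] by linarith
  qed
  finally show ?thesis by (simp add: dev_bound_def)
qed

lemma tail_lipschitz:
  assumes u: "u \<in> Lp" and v: "v \<in> Lp"
  shows "\<bar>tail k u - tail k v\<bar> \<le> (1 + level_lip * norm_W) * dLp u v"
proof -
  have diff: "Lp_fun (\<lambda>x. class_rep u x - class_rep v x)" by (rule Lp_fun_class_rep_diff[OF u v])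
  have "\<bar>tail k u - tail k v\<bar> \<le> Lp_norm (\<lambda>x. dev u x * indicator (R k) x - dev v x * indicator (R k) x)"
    unfolding tail_def by (rule Lp_norm_reverse_triangle[OF Lp_fun_dev_tail(1)[OF u] Lp_fun_dev_tail(1)[OF v]])
  also have "\<dots> \<le> Lp_norm (\<lambda>x. \<bar>class_rep u x - class_rep v x\<bar> + \<bar>level u - level v\<bar> * indicator W x)"
  proof (rule Lp_dominated(2)[OF Lp_norm_abs_add_indicator_W(1)[OF diff]])
    show "(\<lambda>x. dev u x * indicator (R k) x - dev v x * indicator (R k) x) \<in> borel_measurable M"
      using dev_measurable[OF u] dev_measurable[OF v] R_sets by measurable
    show "\<bar>dev u x * indicator (R k) x - dev v x * indicator (R k) x\<bar>
        \<le> \<bar>\<bar>class_rep u x - class_rep v x\<bar> + \<bar>level u - level v\<bar> * indicator W x\<bar>" for x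
      using R_subset_W[of k] abs_triangle_ineq4[of "class_rep u x - class_rep v x" "level u - level v"]
      by (auto simp: dev_def indicator_def algebra_simps)
  qed
  also have "\<dots> \<le> dLp u v + level_lip * dLp u v * norm_W"
    using Lp_norm_abs_add_indicator_W(2)[OF diff, of "level u - level v"]
      mult_right_mono[OF level_lipschitz[OF u v] norm_W_nonneg]
    by (simp add: Lp_dist_class_rep)
  finally show ?thesis by (simp add: algebra_simps)
qed

lemma mix_coeff_lipschitz:
  assumes u: "u \<in> Lp" and v: "v \<in> Lp" and d1: "dLp u v \<le> 1" and d2: "dLp u v \<le> cover_radius u / 2"
  shows "\<bar>mix_coeff k u - mix_coeff k v\<bar> \<le> mix_lip u * dLp u v"
proof -
  have "\<bar>mix_coeff k u - mix_coeff k v\<bar> \<le> \<bar>4 * tail k u / cover_radius u - 4 * tail k v / cover_radius v\<bar>"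
    unfolding mix_coeff_def by (rule clamp_lipschitz)
  also have "\<dots> = \<bar>4 * (tail k u / cover_radius u - tail k v / cover_radius v)\<bar>"
    by (simp add: right_diff_distrib)
  also have "\<dots> = 4 * \<bar>tail k u / cover_radius u - tail k v / cover_radius v\<bar>"
    by (simp only: abs_mult abs_numeral)
  also have "\<dots> \<le> 4 * (((1 + level_lip * norm_W) / cover_radius u + 2 * dev_bound u / (cover_radius u)\<^sup>2)
      * dLp u v)"
    using cover_radius_pos[OF u] cover_radius_lipschitz[OF u v] d2 tail_lipschitz[OF u v]
      Lp_fun_dev_tail(2)[OF v, of k] Lp_norm_dev_le[OF u v d1] Lp_norm_nonneg
    by (intro mult_left_mono abs_diff_divide_le) (auto simp: tail_def)
  finally show ?thesis by (simp only: mix_lip_def mult.assoc)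
qed

lemma mix_lipschitz:
  assumes u: "u \<in> Lp" and v: "v \<in> Lp" and d1: "dLp u v \<le> 1" and d2: "dLp u v \<le> cover_radius u / 2"
  shows "\<bar>mix u x - mix v x\<bar> \<le> mix_lip u * dLp u v"
proof (cases "x \<in> W")
  case True
  then obtain k where k: "x \<in> Q k" unfolding W_def by blast
  show ?thesis using mix_Q[OF k, of u] mix_Q[OF k, of v] mix_coeff_lipschitz[OF u v d1 d2] by simp
next
  case False
  then show ?thesis using mix_lip_nonneg[OF u] by (simp add: mix_outside_W)
qed

lemma pushed_diff_le:
  assumes u: "u \<in> Lp" and v: "v \<in> Lp" and d1: "dLp u v \<le> 1" and d2: "dLp u v \<le> cover_radius u / 2"
  shows "\<bar>pushed u x - pushed v x\<bar>
    \<le> (\<bar>class_rep u x - class_rep v x\<bar> + \<bar>level u - level v\<bar> * indicator W x) + mix_lip u * dLp u v * \<bar>dev v x\<bar>"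
proof (cases "x \<in> W")
  case True
  have "pushed u x - pushed v x = (1 - mix u x) * (class_rep u x - class_rep v x)
      + mix u x * (level u - level v) + (mix u x - mix v x) * (level v - class_rep v x)"
    by (simp add: pushed_def algebra_simps)
  moreover have "\<bar>level v - class_rep v x\<bar> = \<bar>dev v x\<bar>"
    using True by (simp add: dev_def abs_minus_commute)
  ultimately have "\<bar>pushed u x - pushed v x\<bar> \<le> \<bar>class_rep u x - class_rep v x\<bar> + \<bar>level u - level v\<bar>
      + \<bar>mix u x - mix v x\<bar> * \<bar>dev v x\<bar>"
    using abs_convex_comb_le[OF mix_bounds, of u x "class_rep u x - class_rep v x" "level u - level v"
        "mix u x - mix v x" "level v - class_rep v x"] by simp
  also have "\<bar>mix u x - mix v x\<bar> * \<bar>dev v x\<bar> \<le> mix_lip u * dLp u v * \<bar>dev v x\<bar>"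
    by (rule mult_right_mono[OF mix_lipschitz[OF u v d1 d2]]) simp
  finally show ?thesis using True by simp
next
  case False
  then show ?thesis using mix_lip_nonneg[OF u] by (simp add: pushed_def mix_outside_W)
qed

lemma push_lipschitz:
  assumes u: "u \<in> Lp" and v: "v \<in> Lp" and d1: "dLp u v \<le> 1" and d2: "dLp u v \<le> cover_radius u / 2"
  shows "dLp (push u) (push v) \<le> (1 + level_lip * norm_W + mix_lip u * dev_bound u) * dLp u v"
proof -
  define c where "c = mix_lip u * dLp u v"
  have c: "0 \<le> c" using mix_lip_nonneg[OF u] by (simp add: c_def)
  have diff: "Lp_fun (\<lambda>x. class_rep u x - class_rep v x)" by (rule Lp_fun_class_rep_diff[OF u v])
  note near = Lp_norm_abs_add_indicator_W[OF diff, of "level u - level v"]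
  have far: "Lp_fun (\<lambda>x. c * \<bar>dev v x\<bar>)" by (rule Lp_fun_mult[OF Lp_fun_abs[OF Lp_fun_dev[OF v]]])
  have "dLp (push u) (push v) = Lp_norm (\<lambda>x. pushed u x - pushed v x)"
    by (rule Lp_dist_eq_Lp_norm[OF push_in_Lp[OF u] push_in_Lp[OF v] pushed_in_push[OF u] pushed_in_push[OF v]])
  also have "\<dots> \<le> Lp_norm (\<lambda>x. (\<bar>class_rep u x - class_rep v x\<bar> + \<bar>level u - level v\<bar> * indicator W x)
      + c * \<bar>dev v x\<bar>)"
  proof (rule Lp_dominated(2)[OF Minkowski_inequality(1)[OF near(1) far]])
    show "(\<lambda>x. pushed u x - pushed v x) \<in> borel_measurable M"
      using pushed_measurable[OF u] pushed_measurable[OF v] by measurable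
    show "\<bar>pushed u x - pushed v x\<bar> \<le> \<bar>(\<bar>class_rep u x - class_rep v x\<bar> + \<bar>level u - level v\<bar> * indicator W x)
        + c * \<bar>dev v x\<bar>\<bar>" for x
      using pushed_diff_le[OF u v d1 d2, of x] unfolding c_def by linarith
  qed
  also have "\<dots> \<le> (dLp u v + \<bar>level u - level v\<bar> * norm_W) + c * Lp_norm (dev v)"
    using Minkowski_inequality(2)[OF near(1) far] near(2) c
    by (simp add: Lp_norm_mult Lp_norm_abs Lp_dist_class_rep)
  also have "\<dots> \<le> (dLp u v + level_lip * dLp u v * norm_W) + c * dev_bound u"
    using mult_right_mono[OF level_lipschitz[OF u v] norm_W_nonneg]
      mult_left_mono[OF Lp_norm_dev_le[OF u v d1] c] by linarith
  finally show ?thesis by (simp add: c_def algebra_simps)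
qed

lemma continuous_map_push: "continuous_map LM.mtopology LM.mtopology push"
  unfolding LM.metric_continuous_map[OF Metric_space_Lp]
proof (intro conjI ballI allI impI)
  show "push ` Lp \<subseteq> Lp" using push_in_Lp by blast
next
  fix u and e :: real assume u: "u \<in> Lp" and e: "0 < e"
  define K where "K = 1 + level_lip * norm_W + mix_lip u * dev_bound u"
  have K: "0 < K"
    unfolding K_def using level_lip_nonneg norm_W_nonneg mix_lip_nonneg[OF u] dev_bound_nonneg[of u]
    by (simp add: add_pos_nonneg)
  define r where "r = min (min 1 (cover_radius u / 2)) (e / (2 * K))"
  have r: "0 < r" using cover_radius_pos[OF u] K e by (simp add: r_def)
  have "dLp (push u) (push v) < e" if v: "v \<in> Lp" "dLp u v < r" for v
  proof -
    have "dLp (push u) (push v) \<le> K * dLp u v"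
      using push_lipschitz[OF u v(1)] v(2) by (simp add: K_def r_def)
    also have "\<dots> \<le> K * (e / (2 * K))" using v(2) K by (intro mult_left_mono) (auto simp: r_def)
    also have "\<dots> < e" using K e by simp
    finally show ?thesis .
  qed
  then show "\<exists>r>0. \<forall>v. v \<in> Lp \<and> dLp u v < r \<longrightarrow> dLp (push u) (push v) < e" using r by blast
qed

lemma push_cover_small:
  "\<exists>f. continuous_map LM.mtopology LM.mtopology f \<and> f ` topspace LM.mtopology \<inter> small_oscillation M p B = {}
     \<and> (\<forall>z\<in>topspace LM.mtopology. \<exists>U\<in>Uc. z \<in> U \<and> f z \<in> U)"
proof (intro exI conjI ballI)
  show "continuous_map LM.mtopology LM.mtopology push" by (rule continuous_map_push)
  show "push ` topspace LM.mtopology \<inter> small_oscillation M p B = {}"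
    using push_notin_small_oscillation by auto
  fix z assume "z \<in> topspace LM.mtopology"
  then have z: "z \<in> Lp" by simp
  obtain V where V: "V \<in> Uc" "LM.mball z (cover_radius z / 2) \<subseteq> V" using cover_radius_mball[OF z] by blast
  have "z \<in> LM.mball z (cover_radius z / 2)" using z cover_radius_pos[OF z] by simp
  moreover have "push z \<in> LM.mball z (cover_radius z / 2)"
    using z push_in_Lp[OF z] dLp_push_less[OF z] by simp
  ultimately show "\<exists>U\<in>Uc. z \<in> U \<and> push z \<in> U" using V by blast
qed

end

lemma (in Lp_pieces) Z_set_small_oscillation: "Z_set (Lp_topology M p) (small_oscillation M p B)"
  unfolding Z_set_def Lp_topology_def
proof (intro conjI allI impI)
  show "closedin LM.mtopology (small_oscillation M p B)" by (rule closedin_small_oscillation)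
next
  fix Uc assume "(\<forall>U\<in>Uc. openin LM.mtopology U) \<and> \<Union>Uc = topspace LM.mtopology"
  then interpret Lp_pieces_cover M p B P Uc by unfold_locales auto
  show "\<exists>f. continuous_map LM.mtopology LM.mtopology f \<and> f ` topspace LM.mtopology \<inter> small_oscillation M p B = {}
      \<and> (\<forall>z\<in>topspace LM.mtopology. \<exists>U\<in>Uc. z \<in> U \<and> f z \<in> U)"
    by (rule push_cover_small)
qed

section \<open>Metric measure spaces with enough non-atoms\<close>

lemma Cu_subset_Ca:
  assumes "Metric_space (space M) d"
  shows "Cu M d p \<subseteq> Ca M d p"
proof
  interpret MS: Metric_space "space M" d by fact
  fix U assume "U \<in> Cu M d p"
  then obtain f where U: "U \<in> Lp_carrier M p" and f: "f \<in> U" and uc: "unif_cont_on (space M) d f"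
    unfolding Cu_def by blast
  have "\<forall>a\<in>space M. \<forall>\<epsilon>>0. \<exists>\<delta>>0. \<forall>y. y \<in> space M \<and> d a y < \<delta> \<longrightarrow> dist (f a) (f y) < \<epsilon>"
    using uc unfolding unif_cont_on_def dist_real_def by meson
  then have "continuous_map MS.mtopology euclideanreal f"
    using MS.metric_continuous_map[OF Met_TC.Metric_space_axioms, of f] by simp
  then show "U \<in> Ca M d p"
    unfolding Ca_def using U f by (intro CollectI conjI bexI[OF _ f] exI[of _ "{}"]) auto
qed

lemma (in Metric_space) continuous_map_subtopology_imp_mball:
  assumes f: "continuous_map (subtopology mtopology S) euclideanreal f"
    and S: "S \<subseteq> M" and x: "x \<in> S" and e: "0 < e"
  obtains \<rho> where "0 < \<rho>" "\<And>y. y \<in> S \<Longrightarrow> d x y < \<rho> \<Longrightarrow> \<bar>f y - f x\<bar> < e"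
proof -
  interpret Submetric M d S by unfold_locales (rule S)
  have "continuous_map sub.mtopology Met_TC.mtopology f"
    using f by (simp add: mtopology_submetric)
  then have "\<forall>a\<in>S. \<forall>\<epsilon>>0. \<exists>\<delta>>0. \<forall>y. y \<in> S \<and> d a y < \<delta> \<longrightarrow> dist (f a) (f y) < \<epsilon>"
    using sub.metric_continuous_map[OF Met_TC.Metric_space_axioms, of f] by simp
  then obtain \<rho> where "0 < \<rho>" "\<forall>y. y \<in> S \<and> d x y < \<rho> \<longrightarrow> dist (f x) (f y) < e"
    using x e by blast
  then show ?thesis by (intro that) (auto simp: dist_real_def abs_minus_commute)
qed

locale X0_ball_space =
  fixes M :: "'a measure" and d :: "'a \<Rightarrow> 'a \<Rightarrow> real"
  assumes metric: "Metric_space (space M) d"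
  and balls: "\<forall>x\<in>X0 M. (\<forall>r>0. Metric_space.mball (space M) d x r \<in> sets M
                   \<and> emeasure M (Metric_space.mball (space M) d x r) > 0)
               \<and> (\<exists>r>0. emeasure M (Metric_space.mball (space M) d x r) < \<infinity>)"
begin

sublocale MS: Metric_space "space M" d by (rule metric)

lemma mball_sets: "x \<in> X0 M \<Longrightarrow> 0 < r \<Longrightarrow> MS.mball x r \<in> sets M"
  using balls by blast

lemma emeasure_mball_pos: "x \<in> X0 M \<Longrightarrow> 0 < r \<Longrightarrow> 0 < emeasure M (MS.mball x r)"
  using balls by blast

lemma mball_contains_mball_avoiding_centre:
  assumes q: "q \<in> X0 M" and s: "0 < s"
  obtains y t s' where "y \<in> space M" "0 < s'" "s' < s" "0 < t" "MS.mball y t \<subseteq> MS.mball q s"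
    "MS.mball y t \<inter> MS.mball q s' = {}"
proof -
  have q_space: "q \<in> space M" and q_null: "emeasure M {q} = 0" using q by (auto simp: X0_def)
  have "MS.mball q s \<noteq> {q}" using emeasure_mball_pos[OF q s] q_null by auto
  moreover have "q \<in> MS.mball q s" using q_space s by simp
  ultimately obtain y where y: "y \<in> MS.mball q s" "y \<noteq> q" by blast
  define \<rho> where "\<rho> = d q y"
  have \<rho>: "0 < \<rho>" "\<rho> < s" and y_space: "y \<in> space M" using y q_space by (auto simp: \<rho>_def)
  define t where "t = min (\<rho> / 2) (s - \<rho>)"
  show ?thesis
  proof
    show "y \<in> space M" "0 < \<rho> / 2" "\<rho> / 2 < s" "0 < t" using y_space \<rho> by (auto simp: t_def)
    show "MS.mball y t \<subseteq> MS.mball q s"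
      using q_space by (intro MS.mball_subset) (auto simp: t_def \<rho>_def MS.commute)
    show "MS.mball y t \<inter> MS.mball q (\<rho> / 2) = {}"
    proof (rule equals0I)
      fix z assume "z \<in> MS.mball y t \<inter> MS.mball q (\<rho> / 2)"
      then have "z \<in> space M" "d y z < \<rho> / 2" "d q z < \<rho> / 2" by (auto simp: t_def)
      moreover have "d q y \<le> d q z + d z y" using MS.triangle q_space y_space \<open>z \<in> space M\<close> by blast
      ultimately show False using MS.commute[of z y] by (simp add: \<rho>_def)
    qed
  qed
qed

lemma mball_disjoint_pieces:
  assumes q: "q \<in> X0 M" and r: "0 < r" and sub: "MS.mball q r \<subseteq> X0 M"
  obtains P :: "nat \<Rightarrow> 'a set" where "\<And>k. P k \<in> sets M" "\<And>k. P k \<subseteq> MS.mball q r"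
    "\<And>k. 0 < emeasure M (P k)" "disjoint_family P"
proof -
  define good where "good s y t s' \<longleftrightarrow> y \<in> space M \<and> 0 < s' \<and> s' < s \<and> 0 < t
      \<and> MS.mball y t \<subseteq> MS.mball q s \<and> MS.mball y t \<inter> MS.mball q s' = {}" for s y t s'
  have "\<exists>y t s'. good s y t s'" if "0 < s" for s
    unfolding good_def by (rule mball_contains_mball_avoiding_centre[OF q that]) blast
  then obtain cen rad nxt where "\<And>s. 0 < s \<Longrightarrow> good s (cen s) (rad s) (nxt s)" by metis
  then have step: "\<And>s. 0 < s \<Longrightarrow> cen s \<in> space M \<and> 0 < nxt s \<and> nxt s < s
      \<and> 0 < rad s \<and> MS.mball (cen s) (rad s) \<subseteq> MS.mball q s
      \<and> MS.mball (cen s) (rad s) \<inter> MS.mball q (nxt s) = {}"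
    unfolding good_def by blast
  \<comment> \<open>the \<open>k\<close>-th piece lies in the ball of radius \<open>s k\<close> around \<open>q\<close> and misses the one of radius \<open>s (k+1)\<close>\<close>
  define s where "s k = (nxt ^^ k) r" for k
  have s_Suc: "s (Suc k) = nxt (s k)" for k by (simp add: s_def)
  have s_pos: "0 < s k" for k by (induction k) (use r step in \<open>auto simp: s_def\<close>)
  have "decseq s" using step s_pos by (intro decseq_SucI) (simp add: s_Suc less_imp_le)
  then have ball_mono: "MS.mball q (s k) \<subseteq> MS.mball q (s j)" if "j \<le> k" for j k
    using that by (simp add: decseq_def MS.mball_subset_concentric)
  define P where "P k = MS.mball (cen (s k)) (rad (s k))" for k
  have P_in: "P k \<subseteq> MS.mball q (s k)" and P_out: "P k \<inter> MS.mball q (s (Suc k)) = {}" for k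
    using step[OF s_pos[of k]] by (auto simp: P_def s_Suc)
  have P_sub: "P k \<subseteq> MS.mball q r" for k
    using P_in ball_mono[of 0 k] by (auto simp: s_def)
  have "cen (s k) \<in> P k" for k using step[OF s_pos[of k]] by (simp add: P_def)
  then have cen_X0: "cen (s k) \<in> X0 M" for k using P_sub sub by blast
  show ?thesis
  proof
    show "P k \<in> sets M" "0 < emeasure M (P k)" for k
      unfolding P_def using cen_X0 step[OF s_pos[of k]] by (auto intro: mball_sets emeasure_mball_pos)
    show "P k \<subseteq> MS.mball q r" for k by (rule P_sub)
    have "P j \<inter> P k = {}" if "j < k" for j k
      using P_in[of k] P_out[of j] ball_mono[of "Suc j" k] that by auto
    then show "disjoint_family P"
      unfolding disjoint_family_on_def by (metis Int_commute linorder_neqE_nat)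
  qed
qed

lemma mball_in_X0_exists:
  assumes nd: "MS.mtopology closure_of (space M - X0 M) \<noteq> space M"
  obtains x0 r0 where "x0 \<in> X0 M" "0 < r0" "MS.mball x0 r0 \<subseteq> X0 M"
    "emeasure M (MS.mball x0 r0) < \<infinity>"
proof -
  have "MS.mtopology closure_of (space M - X0 M) \<subseteq> space M"
    using closure_of_subset_topspace[of MS.mtopology] by simp
  then obtain x0 where x0: "x0 \<in> space M" "x0 \<notin> MS.mtopology closure_of (space M - X0 M)"
    using nd by blast
  then obtain r where r: "0 < r" "\<forall>y\<in>space M - X0 M. y \<notin> MS.mball x0 r"
    unfolding MS.metric_closure_of by blast
  then have sub: "MS.mball x0 r \<subseteq> X0 M" by auto
  have x0X: "x0 \<in> X0 M" using sub x0 r by auto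
  obtain r' where r': "0 < r'" "emeasure M (MS.mball x0 r') < \<infinity>" using balls x0X by blast
  have "emeasure M (MS.mball x0 (min r r')) \<le> emeasure M (MS.mball x0 r')"
    by (rule emeasure_mono) (auto simp: mball_sets[OF x0X r'(1)])
  then have "emeasure M (MS.mball x0 (min r r')) < \<infinity>" using r'(2) by (rule le_less_trans)
  moreover have "MS.mball x0 (min r r') \<subseteq> X0 M" using sub by auto
  ultimately show ?thesis using x0X r r' by (intro that[of x0 "min r r'"]) auto
qed

lemma Z_set_small_oscillation_mball:
  assumes p: "1 \<le> p" and x0: "x0 \<in> X0 M" "0 < r0" "MS.mball x0 r0 \<subseteq> X0 M"
    and fin: "emeasure M (MS.mball x0 r0) < \<infinity>"
    and q: "q \<in> space M" and r: "0 < r" and sub: "MS.mball q r \<subseteq> MS.mball x0 r0"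
  shows "Z_set (Lp_topology M p) (small_oscillation M p (MS.mball q r))"
proof -
  have subX: "MS.mball q r \<subseteq> X0 M" using sub x0(3) by blast
  have qX: "q \<in> X0 M" using subX q r by auto
  have "emeasure M (MS.mball q r) \<le> emeasure M (MS.mball x0 r0)"
    using sub mball_sets[OF x0(1,2)] by (rule emeasure_mono)
  then have fin_q: "emeasure M (MS.mball q r) < \<infinity>" using fin by (rule le_less_trans)
  show ?thesis
  proof (rule mball_disjoint_pieces[OF qX r subX])
    fix P :: "nat \<Rightarrow> 'a set"
    assume P: "\<And>k. P k \<in> sets M" "\<And>k. P k \<subseteq> MS.mball q r"
      "\<And>k. 0 < emeasure M (P k)" "disjoint_family P"
    interpret Lp_pieces M p "MS.mball q r" P
      by (rule Lp_pieces.intro[OF Lp_space.intro[OF p] Lp_pieces_axioms.intro[OF mball_sets[OF qX r] fin_q P]])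
    show ?thesis by (rule Z_set_small_oscillation)
  qed
qed

lemma Ca_subset_small_oscillation:
  assumes p: "1 \<le> p" and x0: "x0 \<in> X0 M" "0 < r0"
    and dense: "Dn \<subseteq> space M" "MS.mtopology closure_of Dn = space M"
    and U: "U \<in> Ca M d p"
  obtains q n where "q \<in> Dn" "MS.mball q (1 / Suc n) \<subseteq> MS.mball x0 r0"
    "U \<in> small_oscillation M p (MS.mball q (1 / Suc n))"
proof -
  interpret Lp_space M p by unfold_locales (rule p)
  obtain f E where U_Lp: "U \<in> Lp" and f: "f \<in> U" and E: "E \<in> null_sets M"
    and cont: "continuous_map (subtopology MS.mtopology (space M - E)) euclideanreal f"
    using U unfolding Ca_def by blast
  have x0_space: "x0 \<in> space M" using x0(1) by (simp add: X0_def)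
  have "\<not> MS.mball x0 r0 \<subseteq> E"
  proof
    assume "MS.mball x0 r0 \<subseteq> E"
    then have "emeasure M (MS.mball x0 r0) \<le> emeasure M E" using E by (intro emeasure_mono) auto
    then show False using emeasure_mball_pos[OF x0] null_setsD1[OF E] by simp
  qed
  then obtain x where x: "x \<in> MS.mball x0 r0" "x \<notin> E" by blast
  obtain \<rho> where \<rho>: "0 < \<rho>" "\<And>y. y \<in> space M - E \<Longrightarrow> d x y < \<rho> \<Longrightarrow> \<bar>f y - f x\<bar> < 1/2"
    using MS.continuous_map_subtopology_imp_mball[OF cont, of x "1/2"] x by auto
  define e where "e = min \<rho> (r0 - d x0 x)"
  have e: "0 < e" using \<rho> x by (simp add: e_def)
  obtain n :: nat where n: "1 / Suc n < e / 2" by (rule nat_approx_posE[of "e / 2"]) (use e in auto)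
  have "x \<in> MS.mtopology closure_of Dn" using x dense(2) by simp
  then have "\<forall>r>0. \<exists>q\<in>Dn. q \<in> MS.mball x r" unfolding MS.metric_closure_of by blast
  moreover have "0 < 1 / real (Suc n)" by simp
  ultimately obtain q where q: "q \<in> Dn" "q \<in> MS.mball x (1 / Suc n)" by blast
  have ball_q: "MS.mball q (1 / Suc n) \<subseteq> MS.mball x e"
    using q n x by (intro MS.mball_subset) (auto simp: MS.commute)
  also have "\<dots> \<subseteq> MS.mball x0 r0"
    using x x0_space by (intro MS.mball_subset) (auto simp: e_def MS.commute)
  finally have sub: "MS.mball q (1 / Suc n) \<subseteq> MS.mball x0 r0" .
  have "AE y in M. y \<in> MS.mball q (1 / Suc n) \<longrightarrow> \<bar>f y - f x\<bar> \<le> 1/2"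
    using AE_not_in[OF E]
  proof eventually_elim
    case (elim y)
    show ?case using ball_q \<rho>(2)[of y] elim by (auto simp: e_def)
  qed
  then show ?thesis
    using that[OF q(1) sub] small_oscillation_if_near_const[OF U_Lp f] by blast
qed

lemma Ca_subset_Z_sigma_set:
  assumes p: "1 \<le> p" and separable: "separable_space MS.mtopology"
    and not_dense: "MS.mtopology closure_of (space M - X0 M) \<noteq> space M"
  shows "\<exists>S. Z_sigma_set (Lp_topology M p) S \<and> Ca M d p \<subseteq> S"
proof -
  obtain x0 r0 where x0: "x0 \<in> X0 M" "0 < r0" "MS.mball x0 r0 \<subseteq> X0 M"
    and fin: "emeasure M (MS.mball x0 r0) < \<infinity>"
    using mball_in_X0_exists[OF not_dense] by blast
  obtain Dn where Dn: "countable Dn" "Dn \<subseteq> space M" "MS.mtopology closure_of Dn = space M"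
    using separable unfolding separable_space_def by auto
  define I where "I = {(q, n). q \<in> Dn \<and> MS.mball q (1 / Suc n) \<subseteq> MS.mball x0 r0}"
  define A where "A = (\<lambda>(q, n). small_oscillation M p (MS.mball q (1 / Suc n)))"
  have "I \<subseteq> Dn \<times> UNIV" by (auto simp: I_def)
  then have "countable I" by (rule countable_subset) (simp add: Dn(1))
  then have "countable (A ` I)" by simp
  moreover have "Z_set (Lp_topology M p) (A i)" if "i \<in> I" for i
  proof -
    obtain q n where i: "i = (q, n)" by (cases i)
    with that have "q \<in> Dn" "MS.mball q (1 / Suc n) \<subseteq> MS.mball x0 r0" by (simp_all add: I_def)
    then show ?thesis
      unfolding i A_def prod.case using Dn(2) by (intro Z_set_small_oscillation_mball[OF p x0 fin]) auto
  qed
  moreover have "U \<in> \<Union>(A ` I)" if U: "U \<in> Ca M d p" for U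
  proof -
    obtain q n where "q \<in> Dn" "MS.mball q (1 / Suc n) \<subseteq> MS.mball x0 r0"
      "U \<in> small_oscillation M p (MS.mball q (1 / Suc n))"
      by (rule Ca_subset_small_oscillation[OF p x0(1,2) Dn(2,3) U])
    then have "(q, n) \<in> I" "U \<in> A (q, n)" by (simp_all add: I_def A_def)
    then show ?thesis by (rule UN_I)
  qed
  ultimately show ?thesis
    unfolding Z_sigma_set_def by (intro exI[of _ "\<Union>(A ` I)"] conjI exI[of _ "A ` I"] ballI subsetI)
      (auto simp only: image_iff)
qed

end

theorem mainTheorem6:
  fixes M :: "'a measure" and d :: "'a \<Rightarrow> 'a \<Rightarrow> real" and p :: real
  assumes metric: "Metric_space (space M) d"
    and separable: "separable_space (Metric_space.mtopology (space M) d)"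
    and p: "1 \<le> p"
    and balls: "\<forall>x\<in>X0 M. (\<forall>r>0. Metric_space.mball (space M) d x r \<in> sets M
                   \<and> emeasure M (Metric_space.mball (space M) d x r) > 0)
               \<and> (\<exists>r>0. emeasure M (Metric_space.mball (space M) d x r) < \<infinity>)"
    and not_dense: "Metric_space.mtopology (space M) d closure_of (space M - X0 M) \<noteq> space M"
  shows "(\<exists>S. Z_sigma_set (Lp_topology M p) S \<and> Ca M d p \<subseteq> S)
       \<and> (\<exists>S. Z_sigma_set (Lp_topology M p) S \<and> Cu M d p \<subseteq> S)"
proof -
  interpret X0_ball_space M d by (rule X0_ball_space.intro[OF metric balls])
  show ?thesis
    using Ca_subset_Z_sigma_set[OF p separable not_dense] Cu_subset_Ca[OF metric] by blast
qed

end
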